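(* In the setting of the model $X=ZL^T+E$ with $Z\in\mathcal{S}(N,K)$, $l_{p,k}$ independent with $l_{p,k}\sim g_k$, $e_{n,p}$ i.i.d. $N(0,1/\tau)$, and with $F(\mathbf{g},Z,\tau,q)=\mathbb{E}_q\log p(X\mid Z,L,\tau)-\mathrm{KL}(q\|\mathbf{g})$, define for $\bar L\in\mathcal{M}(P,K)$ $$\tilde F(\mathbf{g},Z,\tau,\bar L):=\sup_{q:\,\mathbb{E}_q(L)=\bar L}F(\mathbf{g},Z,\tau,q),$$ the supremum being over distributions $q$ on $\mathcal{M}(P,K)$ with finite second moments and mean $\bar L$. Then $$\tilde F(\mathbf{g},Z,\tau,\bar L)=-\tau\Big(\tfrac12\|X-Z\bar L^T\|_F^2+\sum_{k=1}^K\sum_{p=1}^P P_{\tau,g_k}(\bar l_{p,k})\Big),$$ where for a distribution $g$ on $\mathbb{R}$ and $\bar l\in\mathbb{R}$, $$P_{\tau,g}(\bar l)=\frac{N}{2K\tau}\log\frac{2\pi}{\tau}+\frac12\inf_{q:\,\mathbb{E}_q[l]=\bar l}\Big(\mathrm{Var}_q(l)+\frac{2}{\tau}\mathrm{KL}(q\|g)\Big),$$ the infimum being over distributions $q$ on $\mathbb{R}$ with mean $\bar l$ and finite variance.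
   Context: $\mathcal{M}(N,K)$ is the set of real $N\times K$ matrices and $\mathcal{S}(N,K)=\{M\in\mathcal{M}(N,K):M^TM=I_K\}$. $p(X\mid Z,L,\tau)=\prod_{n,p}N(x_{n,p};(ZL^T)_{n,p},1/\tau)$, $\mathbf{g}=(g_1,\dots,g_K)$ with $\mathbf{g}(L)=\prod_{p,k}g_k(l_{p,k})$, and $\mathrm{KL}(q\|g)=\mathbb{E}_q[\log(q/g)]$. *)

theory Defs
  imports "HOL-Probability.Probability"
begin

text \<open>Matrices are represented as functions on finite index types:
  X n p (N x P), Z n k (N x K), L p k (P x K).\<close>

definition KL :: "'a measure \<Rightarrow> 'a measure \<Rightarrow> ereal" where
  "KL q g = (if absolutely_continuous g q \<and> sets q = sets g \<and>
                 integrable q (\<lambda>x. ln (enn2real (RN_deriv g q x)))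
             then ereal (\<integral>x. ln (enn2real (RN_deriv g q x)) \<partial>q) else \<infinity>)"

definition orthonormal_cols :: "('n::finite \<Rightarrow> 'k::finite \<Rightarrow> real) \<Rightarrow> bool" where
  "orthonormal_cols Z \<longleftrightarrow> (\<forall>k k'. (\<Sum>n\<in>UNIV. Z n k * Z n k') = (if k = k' then 1 else 0))"

definition ZLt :: "('n::finite \<Rightarrow> 'k::finite \<Rightarrow> real) \<Rightarrow> ('p::finite \<Rightarrow> 'k \<Rightarrow> real) \<Rightarrow> 'n \<Rightarrow> 'p \<Rightarrow> real" where
  "ZLt Z L n p = (\<Sum>k\<in>UNIV. Z n k * L p k)"

definition frob_sq :: "('n::finite \<Rightarrow> 'p::finite \<Rightarrow> real) \<Rightarrow> ('n \<Rightarrow> 'k::finite \<Rightarrow> real) \<Rightarrow> ('p \<Rightarrow> 'k \<Rightarrow> real) \<Rightarrow> real" where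
  "frob_sq X Z L = (\<Sum>n\<in>UNIV. \<Sum>p\<in>UNIV. (X n p - ZLt Z L n p)\<^sup>2)"

definition lik :: "('n::finite \<Rightarrow> 'p::finite \<Rightarrow> real) \<Rightarrow> ('n \<Rightarrow> 'k::finite \<Rightarrow> real) \<Rightarrow> ('p \<Rightarrow> 'k \<Rightarrow> real) \<Rightarrow> real \<Rightarrow> real" where
  "lik X Z L \<tau> = (\<Prod>n\<in>UNIV. \<Prod>p\<in>UNIV. normal_density (ZLt Z L n p) (sqrt (1 / \<tau>)) (X n p))"

definition Lspace :: "('p::finite \<Rightarrow> 'k::finite \<Rightarrow> real) measure" where
  "Lspace = (\<Pi>\<^sub>M p\<in>UNIV. \<Pi>\<^sub>M k\<in>UNIV. (borel :: real measure))"

definition prior :: "('k::finite \<Rightarrow> real measure) \<Rightarrow> ('p::finite \<Rightarrow> 'k \<Rightarrow> real) measure" where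
  "prior g = (\<Pi>\<^sub>M p\<in>UNIV. \<Pi>\<^sub>M k\<in>UNIV. g k)"

definition Fobj :: "('n::finite \<Rightarrow> 'p::finite \<Rightarrow> real) \<Rightarrow> ('k::finite \<Rightarrow> real measure) \<Rightarrow>
    ('n \<Rightarrow> 'k \<Rightarrow> real) \<Rightarrow> real \<Rightarrow> ('p \<Rightarrow> 'k \<Rightarrow> real) measure \<Rightarrow> ereal" where
  "Fobj X g Z \<tau> q = ereal (\<integral>L. ln (lik X Z L \<tau>) \<partial>q) - KL q (prior g)"

definition admissible_L :: "('p::finite \<Rightarrow> 'k::finite \<Rightarrow> real) \<Rightarrow> ('p \<Rightarrow> 'k \<Rightarrow> real) measure \<Rightarrow> bool" where
  "admissible_L Lbar q \<longleftrightarrow> prob_space q \<and> sets q = sets Lspace \<and>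
     (\<forall>p k. integrable q (\<lambda>L. (L p k)\<^sup>2) \<and> (\<integral>L. L p k \<partial>q) = Lbar p k)"

definition Ftilde :: "('n::finite \<Rightarrow> 'p::finite \<Rightarrow> real) \<Rightarrow> ('k::finite \<Rightarrow> real measure) \<Rightarrow>
    ('n \<Rightarrow> 'k \<Rightarrow> real) \<Rightarrow> real \<Rightarrow> ('p \<Rightarrow> 'k \<Rightarrow> real) \<Rightarrow> ereal" where
  "Ftilde X g Z \<tau> Lbar = (SUP q \<in> {q. admissible_L Lbar q}. Fobj X g Z \<tau> q)"

definition admissible_1 :: "real \<Rightarrow> real measure \<Rightarrow> bool" where
  "admissible_1 lbar q \<longleftrightarrow> prob_space q \<and> sets q = sets borel \<and>
     integrable q (\<lambda>l. l\<^sup>2) \<and> (\<integral>l. l \<partial>q) = lbar"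

definition Ppen :: "nat \<Rightarrow> nat \<Rightarrow> real \<Rightarrow> real measure \<Rightarrow> real \<Rightarrow> ereal" where
  "Ppen N K \<tau> g lbar =
     ereal (real N / (2 * real K * \<tau>) * ln (2 * pi / \<tau>)) +
     ereal (1/2) * (INF q \<in> {q. admissible_1 lbar q}.
        ereal (\<integral>l. (l - (\<integral>l'. l' \<partial>q))\<^sup>2 \<partial>q) + ereal (2 / \<tau>) * KL q g)"

end

theory Submission
  imports Defs
begin

text \<open>For admissible \<open>q\<close> the expected log-likelihood depends on \<open>q\<close> only through its mean
  \<open>Lbar\<close> and the variances of its entries, because \<open>Z\<close> has orthonormal columns. The KL
  divergence from \<open>q\<close> to the product prior dominates the sum of the entrywise KL divergences of
  its marginals (Gibbs' inequality applied to a product of truncated marginal densities), with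
  equality when \<open>q\<close> is itself a product. So the supremum over \<open>q\<close> splits into one
  infimum per entry, and it is approached by products of near-optimal one-dimensional
  distributions.\<close>

section \<open>Gaussian likelihood\<close>

lemma ln_normal_density_precision:
  assumes "\<tau> > 0"
  shows "ln (normal_density m (sqrt (1 / \<tau>)) x) = - ln (2 * pi / \<tau>) / 2 - \<tau> / 2 * (x - m)\<^sup>2"
proof -
  have "(sqrt (1 / \<tau>))\<^sup>2 = 1 / \<tau>" using assms by simp
  then have "ln (normal_density m (sqrt (1 / \<tau>)) x)
      = ln (1 / sqrt (2 * pi / \<tau>)) + (- (x - m)\<^sup>2 / (2 * (1 / \<tau>)))"
    unfolding normal_density_def using assms by (subst ln_mult) (auto simp: ln_exp)
  also have "ln (1 / sqrt (2 * pi / \<tau>)) = - ln (2 * pi / \<tau>) / 2"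
    using assms by (simp add: ln_div ln_sqrt field_simps)
  finally show ?thesis using assms by (simp add: field_simps)
qed

lemma ln_lik:
  fixes X :: "'n::finite \<Rightarrow> 'p::finite \<Rightarrow> real" and Z :: "'n \<Rightarrow> 'k::finite \<Rightarrow> real"
  assumes "\<tau> > 0"
  shows "ln (lik X Z L \<tau>) =
    - (real CARD('n) * real CARD('p) / 2) * ln (2 * pi / \<tau>) - \<tau> / 2 * frob_sq X Z L"
proof -
  have "normal_density m (sqrt (1 / \<tau>)) x > 0" for m x
    using assms by (simp add: normal_density_pos)
  then have "ln (lik X Z L \<tau>) =
      (\<Sum>n\<in>UNIV. \<Sum>p\<in>UNIV. ln (normal_density (ZLt Z L n p) (sqrt (1 / \<tau>)) (X n p)))"
    unfolding lik_def by (simp add: ln_prod prod_pos less_imp_neq[symmetric])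
  also have "\<dots> = (\<Sum>n\<in>UNIV. \<Sum>p\<in>UNIV. - ln (2 * pi / \<tau>) / 2 - \<tau> / 2 * (X n p - ZLt Z L n p)\<^sup>2)"
    using assms by (simp add: ln_normal_density_precision)
  also have "\<dots> = - (real CARD('n) * real CARD('p) / 2) * ln (2 * pi / \<tau>) - \<tau> / 2 * frob_sq X Z L"
    unfolding frob_sq_def by (simp add: sum_subtractf sum_distrib_left)
  finally show ?thesis .
qed

text \<open>Since \<open>Z\<close> has orthonormal columns, \<open>\<parallel>Z D\<^sup>T\<parallel>\<^sub>F = \<parallel>D\<parallel>\<^sub>F\<close>, so the squared
  Frobenius distance is a quadratic in \<open>L\<close> whose second-order part is \<open>\<parallel>L - Lb\<parallel>\<^sub>F\<^sup>2\<close>.\<close>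
lemma frob_sq_shift:
  fixes X :: "'n::finite \<Rightarrow> 'p::finite \<Rightarrow> real" and Z :: "'n \<Rightarrow> 'k::finite \<Rightarrow> real"
  assumes "orthonormal_cols Z"
  shows "frob_sq X Z L = frob_sq X Z Lb
    - 2 * (\<Sum>n\<in>UNIV. \<Sum>p\<in>UNIV. (X n p - ZLt Z Lb n p) * (\<Sum>k\<in>UNIV. Z n k * (L p k - Lb p k)))
    + (\<Sum>p\<in>UNIV. \<Sum>k\<in>UNIV. (L p k - Lb p k)\<^sup>2)"
proof -
  define a where "a n p = X n p - ZLt Z Lb n p" for n p
  define D where "D p k = L p k - Lb p k" for p k
  have orth: "(\<Sum>n\<in>UNIV. Z n k * Z n k') = (if k = k' then 1 else 0)" for k k'
    using assms unfolding orthonormal_cols_def by blast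
  have sq: "(\<Sum>k\<in>UNIV. Z n k * D p k)\<^sup>2 = (\<Sum>k\<in>UNIV. \<Sum>k'\<in>UNIV. Z n k * Z n k' * (D p k * D p k'))" for n p
    by (simp add: power2_eq_square sum_product algebra_simps)
  have "(\<Sum>n\<in>UNIV. \<Sum>p\<in>UNIV. (\<Sum>k\<in>UNIV. Z n k * D p k)\<^sup>2)
      = (\<Sum>p\<in>UNIV. \<Sum>k\<in>UNIV. \<Sum>k'\<in>UNIV. (\<Sum>n\<in>UNIV. Z n k * Z n k') * (D p k * D p k'))"
    unfolding sq sum_distrib_right
    by (subst sum.swap, rule sum.cong[OF refl], subst sum.swap, rule sum.cong[OF refl], rule sum.swap)
  also have "\<dots> = (\<Sum>p\<in>UNIV. \<Sum>k\<in>UNIV. (D p k)\<^sup>2)"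
    by (simp add: orth power2_eq_square if_distrib[of "\<lambda>c. c * _"] sum.delta cong: if_cong)
  finally have quad: "(\<Sum>n\<in>UNIV. \<Sum>p\<in>UNIV. (\<Sum>k\<in>UNIV. Z n k * D p k)\<^sup>2) = (\<Sum>p\<in>UNIV. \<Sum>k\<in>UNIV. (D p k)\<^sup>2)" .
  have residual: "X n p - ZLt Z L n p = a n p - (\<Sum>k\<in>UNIV. Z n k * D p k)" for n p
    unfolding a_def D_def ZLt_def by (simp add: algebra_simps sum_subtractf)
  have "frob_sq X Z L = (\<Sum>n\<in>UNIV. \<Sum>p\<in>UNIV.
      (a n p)\<^sup>2 - 2 * (a n p * (\<Sum>k\<in>UNIV. Z n k * D p k)) + (\<Sum>k\<in>UNIV. Z n k * D p k)\<^sup>2)"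
    unfolding frob_sq_def residual by (simp add: power2_diff algebra_simps)
  also have "\<dots> = frob_sq X Z Lb - 2 * (\<Sum>n\<in>UNIV. \<Sum>p\<in>UNIV. a n p * (\<Sum>k\<in>UNIV. Z n k * D p k))
      + (\<Sum>n\<in>UNIV. \<Sum>p\<in>UNIV. (\<Sum>k\<in>UNIV. Z n k * D p k)\<^sup>2)"
    unfolding frob_sq_def a_def by (simp add: sum.distrib sum_subtractf sum_distrib_left)
  finally show ?thesis unfolding quad by (simp add: a_def D_def)
qed

lemma measurable_Lspace_entry [measurable]:
  "(\<lambda>L. L p k) \<in> borel_measurable (Lspace :: ('p::finite \<Rightarrow> 'k::finite \<Rightarrow> real) measure)"
proof -
  have "(\<lambda>L. L p) \<in> measurable Lspace (\<Pi>\<^sub>M k\<in>UNIV. (borel :: real measure))"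
    unfolding Lspace_def by (rule measurable_component_singleton) simp
  moreover have "(\<lambda>l. l k) \<in> measurable (\<Pi>\<^sub>M k\<in>(UNIV :: 'k set). (borel :: real measure)) borel"
    by (rule measurable_component_singleton) simp
  ultimately show ?thesis by (rule measurable_compose)
qed

lemma measurable_entry:
  "sets q = sets (Lspace :: ('p::finite \<Rightarrow> 'k::finite \<Rightarrow> real) measure) \<Longrightarrow>
    (\<lambda>L. L p k) \<in> borel_measurable q"
  using measurable_Lspace_entry measurable_cong_sets by blast

lemma admissible_L_integrable:
  fixes q :: "('p::finite \<Rightarrow> 'k::finite \<Rightarrow> real) measure"
  assumes "admissible_L Lbar q"
  shows "integrable q (\<lambda>L. L p k)" "integrable q (\<lambda>L. (L p k - c)\<^sup>2)"
proof -
  interpret prob_space q using assms unfolding admissible_L_def by auto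
  have sq: "integrable q (\<lambda>L. (L p k)\<^sup>2)" using assms unfolding admissible_L_def by auto
  moreover have "(\<lambda>L. L p k) \<in> borel_measurable q"
    using assms measurable_entry unfolding admissible_L_def by blast
  ultimately show i: "integrable q (\<lambda>L. L p k)"
    by (rule square_integrable_imp_integrable[rotated])
  have "integrable q (\<lambda>L. (L p k)\<^sup>2 - 2 * c * L p k + c\<^sup>2)"
    using i sq by auto
  then show "integrable q (\<lambda>L. (L p k - c)\<^sup>2)"
    by (simp add: power2_diff algebra_simps)
qed

text \<open>The cross term of the expansion in \<open>frob_sq_shift\<close> has mean zero because \<open>Lbar\<close> is the mean of \<open>q\<close>.\<close>
lemma expected_ln_lik:
  fixes X :: "'n::finite \<Rightarrow> 'p::finite \<Rightarrow> real" and Z :: "'n \<Rightarrow> 'k::finite \<Rightarrow> real"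
  assumes tau: "\<tau> > 0" and Z: "orthonormal_cols Z" and q: "admissible_L Lbar q"
  shows "(\<integral>L. ln (lik X Z L \<tau>) \<partial>q) = - (real CARD('n) * real CARD('p) / 2) * ln (2 * pi / \<tau>)
     - \<tau> / 2 * (frob_sq X Z Lbar + (\<Sum>p\<in>UNIV. \<Sum>k\<in>UNIV. \<integral>L. (L p k - Lbar p k)\<^sup>2 \<partial>q))"
proof -
  interpret prob_space q using q unfolding admissible_L_def by auto
  define C where "C = - (real CARD('n) * real CARD('p) / 2) * ln (2 * pi / \<tau>)"
  define T where "T L = (\<Sum>n\<in>UNIV. \<Sum>p\<in>UNIV.
      (X n p - ZLt Z Lbar n p) * (\<Sum>k\<in>UNIV. Z n k * (L p k - Lbar p k)))" for L
  define S where "S L = (\<Sum>p\<in>UNIV. \<Sum>k\<in>UNIV. (L p k - Lbar p k)\<^sup>2)" for L :: "'p \<Rightarrow> 'k \<Rightarrow> real"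
  have iD: "integrable q (\<lambda>L. L p k - Lbar p k)" for p k
    using admissible_L_integrable(1)[OF q] by auto
  have ED: "(\<integral>L. L p k - Lbar p k \<partial>q) = 0" for p k
    using admissible_L_integrable(1)[OF q] q unfolding admissible_L_def by (simp add: prob_space)
  have iS: "integrable q (\<lambda>L. (L p k - Lbar p k)\<^sup>2)" for p k
    using admissible_L_integrable(2)[OF q] .
  have "ln (lik X Z L \<tau>) = C - \<tau> / 2 * frob_sq X Z Lbar + \<tau> * T L - \<tau> / 2 * S L" for L
    unfolding ln_lik[OF tau] C_def frob_sq_shift[OF Z, of X L Lbar] T_def S_def
    by (simp add: algebra_simps)
  then have "(\<integral>L. ln (lik X Z L \<tau>) \<partial>q) = (\<integral>L. C - \<tau> / 2 * frob_sq X Z Lbar + \<tau> * T L - \<tau> / 2 * S L \<partial>q)"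
    by simp
  also have "\<dots> = C - \<tau> / 2 * frob_sq X Z Lbar + \<tau> * integral\<^sup>L q T - \<tau> / 2 * integral\<^sup>L q S"
  proof -
    have "integrable q T" "integrable q S"
      unfolding T_def S_def using iD iS by auto
    then show ?thesis by (simp add: prob_space)
  qed
  also have "integral\<^sup>L q T = 0"
    unfolding T_def using iD ED by (simp add: integral_sum integrable_sum integral_mult_right_zero)
  also have "integral\<^sup>L q S = (\<Sum>p\<in>UNIV. \<Sum>k\<in>UNIV. \<integral>L. (L p k - Lbar p k)\<^sup>2 \<partial>q)"
    unfolding S_def using iS by (simp add: integral_sum integrable_sum)
  finally show ?thesis unfolding C_def by (simp add: algebra_simps)
qed

section \<open>Kullback-Leibler divergence\<close>

lemma mult_neg_ln_le_one:
  assumes "0 \<le> (x::real)"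
  shows "x * max 0 (- ln x) \<le> 1"
proof (cases "0 < x \<and> x < 1")
  case True
  have "ln (1 / x) \<le> 1 / x - 1"
    using True by (intro ln_le_minus_one) simp
  then have "x * (- ln x) \<le> x * (1 / x - 1)"
    using True by (intro mult_left_mono) (auto simp: ln_div)
  also have "\<dots> \<le> 1"
    using True by (simp add: right_diff_distrib)
  finally show ?thesis
    using True by (simp add: max_def)
next
  case False
  then have "x = 0 \<or> 1 \<le> x" using assms by linarith
  then show ?thesis by auto
qed

lemma (in finite_measure) tendsto_integral_min:
  fixes h :: "'a \<Rightarrow> real" and c :: "nat \<Rightarrow> real"
  assumes [measurable]: "h \<in> borel_measurable M" and h_nonneg: "\<And>x. 0 \<le> h x"
    and c: "incseq c" "\<And>n. 0 \<le> c n" "filterlim c at_top sequentially"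
  shows "(\<lambda>n. ereal (\<integral>x. min (h x) (c n) \<partial>M)) \<longlonglongrightarrow> enn2ereal (\<integral>\<^sup>+x. h x \<partial>M)"
proof -
  have "(\<lambda>n. \<integral>\<^sup>+x. ennreal (min (h x) (c n)) \<partial>M) \<longlonglongrightarrow> (\<integral>\<^sup>+x. h x \<partial>M)"
  proof (rule nn_integral_LIMSEQ)
    show "incseq (\<lambda>n x. ennreal (min (h x) (c n)))"
      using c(1) by (auto simp: incseq_def le_fun_def intro!: ennreal_leI min.mono)
    fix x
    have "\<forall>\<^sub>F n in sequentially. h x \<le> c n"
      using c(3) by (simp add: filterlim_at_top)
    then have "\<forall>\<^sub>F n in sequentially. ennreal (min (h x) (c n)) = ennreal (h x)"
      by eventually_elim simp
    then show "(\<lambda>n. ennreal (min (h x) (c n))) \<longlonglongrightarrow> ennreal (h x)"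
      by (rule tendsto_eventually)
  qed measurable
  moreover have "(\<integral>\<^sup>+x. ennreal (min (h x) (c n)) \<partial>M) = ennreal (\<integral>x. min (h x) (c n) \<partial>M)" for n
  proof (rule nn_integral_eq_integral)
    show "integrable M (\<lambda>x. min (h x) (c n))"
      by (rule integrable_const_bound[where B = "c n"]) (use h_nonneg c(2) in auto)
  qed (use h_nonneg c(2) in auto)
  ultimately have "(\<lambda>n. ennreal (\<integral>x. min (h x) (c n) \<partial>M)) \<longlonglongrightarrow> (\<integral>\<^sup>+x. h x \<partial>M)"
    by simp
  then have "(\<lambda>n. enn2ereal (ennreal (\<integral>x. min (h x) (c n) \<partial>M))) \<longlonglongrightarrow> enn2ereal (\<integral>\<^sup>+x. h x \<partial>M)"
    by (rule tendsto_enn2erealI)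
  moreover have "0 \<le> (\<integral>x. min (h x) (c n) \<partial>M)" for n
    using h_nonneg c(2) by (intro Bochner_Integration.integral_nonneg) auto
  ultimately show ?thesis by simp
qed

locale dominated_prob = Q: prob_space q + G: prob_space g for q g :: "'a measure" +
  assumes sets_eq: "sets q = sets g"
    and abs_cont: "absolutely_continuous g q"
begin

definition dens :: "'a \<Rightarrow> real" where
  "dens x = enn2real (RN_deriv g q x)"

lemma borel_measurable_dens_g [measurable]: "dens \<in> borel_measurable g"
  unfolding dens_def by measurable

lemma borel_measurable_dens [measurable]: "dens \<in> borel_measurable q"
  using borel_measurable_dens_g measurable_cong_sets[OF sets_eq refl] by blast

lemma dens_nonneg: "0 \<le> dens x"
  by (simp add: dens_def)

lemma density_RN_deriv_eq: "density g (RN_deriv g q) = q"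
  using abs_cont sets_eq by (rule G.density_RN_deriv)

lemma AE_RN_deriv_finite: "AE x in g. RN_deriv g q x \<noteq> \<infinity>"
  by (rule G.RN_deriv_finite[OF prob_space_imp_sigma_finite[OF Q.prob_space_axioms] abs_cont sets_eq])

lemma AE_RN_deriv_eq_dens: "AE x in g. RN_deriv g q x = ennreal (dens x)"
  using AE_RN_deriv_finite by eventually_elim (simp add: dens_def ennreal_enn2real_if)

lemma AE_dens_pos: "AE x in q. 0 < dens x"
proof -
  have "AE x in density g (RN_deriv g q). 0 < RN_deriv g q x"
    by (subst AE_density) auto
  moreover have "AE x in density g (RN_deriv g q). RN_deriv g q x \<noteq> \<infinity>"
    using AE_RN_deriv_finite by (subst AE_density) auto
  ultimately have "AE x in density g (RN_deriv g q). 0 < dens x"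
    by eventually_elim (auto simp: dens_def enn2real_positive_iff top.not_eq_extremum)
  then show ?thesis by (simp only: density_RN_deriv_eq)
qed

lemma nn_integral_eq_RN_deriv:
  assumes [measurable]: "u \<in> borel_measurable g"
  shows "(\<integral>\<^sup>+x. u x \<partial>q) = (\<integral>\<^sup>+x. RN_deriv g q x * u x \<partial>g)"
  by (subst density_RN_deriv_eq[symmetric], rule nn_integral_density) auto

lemma nn_integral_dens_le_one: "(\<integral>\<^sup>+x. ennreal (dens x) \<partial>g) \<le> 1"
proof -
  have "(\<integral>\<^sup>+x. ennreal (dens x) \<partial>g) = (\<integral>\<^sup>+x. RN_deriv g q x * 1 \<partial>g)"
    using AE_RN_deriv_eq_dens by (intro nn_integral_cong_AE) auto
  also have "\<dots> = (\<integral>\<^sup>+x. 1 \<partial>q)"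
    by (rule nn_integral_eq_RN_deriv[symmetric]) simp
  also have "\<dots> = 1"
    by (simp add: Q.emeasure_space_1)
  finally show ?thesis by simp
qed

lemma nn_integral_neg_ln_dens_le_one: "(\<integral>\<^sup>+x. ennreal (max 0 (- ln (dens x))) \<partial>q) \<le> 1"
proof -
  have "(\<integral>\<^sup>+x. ennreal (max 0 (- ln (dens x))) \<partial>q)
      = (\<integral>\<^sup>+x. RN_deriv g q x * ennreal (max 0 (- ln (dens x))) \<partial>g)"
    by (rule nn_integral_eq_RN_deriv) measurable
  also have "\<dots> \<le> (\<integral>\<^sup>+x. 1 \<partial>g)"
    using AE_RN_deriv_eq_dens
  proof (intro nn_integral_mono_AE, eventually_elim)
    case (elim x)
    have "ennreal (dens x) * ennreal (max 0 (- ln (dens x))) = ennreal (dens x * max 0 (- ln (dens x)))"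
      by (simp add: ennreal_mult' dens_nonneg)
    also have "\<dots> \<le> 1"
      using mult_neg_ln_le_one[OF dens_nonneg] by (simp add: ennreal_leI)
    finally show ?case unfolding elim .
  qed
  also have "\<dots> = 1" by (simp add: G.emeasure_space_1)
  finally show ?thesis .
qed

lemma KL_eq_integral_ln_dens:
  "KL q g = (if integrable q (\<lambda>x. ln (dens x)) then ereal (\<integral>x. ln (dens x) \<partial>q) else \<infinity>)"
  unfolding KL_def dens_def using abs_cont sets_eq by simp

text \<open>Gibbs' inequality in variational form: apply \<open>ln y \<le> y - 1\<close> to \<open>y = h / dens\<close>.\<close>
lemma gibbs_inequality:
  assumes h_meas [measurable]: "h \<in> borel_measurable g" and h_pos: "\<And>x. 0 < h x"
    and h_int: "(\<integral>\<^sup>+x. ennreal (h x) \<partial>g) \<le> ennreal C" and C_nonneg: "0 \<le> C"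
    and ln_h_int: "integrable q (\<lambda>x. ln (h x))"
  shows "ereal (\<integral>x. ln (h x) \<partial>q) \<le> KL q g + ereal (C - 1)"
proof (cases "integrable q (\<lambda>x. ln (dens x))")
  case False
  then show ?thesis by (simp add: KL_eq_integral_ln_dens)
next
  case True
  have [measurable]: "h \<in> borel_measurable q"
    using h_meas measurable_cong_sets[OF sets_eq refl] by blast
  define u where "u x = h x / dens x" for x
  have u_meas: "u \<in> borel_measurable q"
    unfolding u_def by measurable
  have u_nonneg: "0 \<le> u x" for x
    unfolding u_def using h_pos[of x] dens_nonneg[of x] by simp
  have "(\<integral>\<^sup>+x. ennreal (u x) \<partial>q) = (\<integral>\<^sup>+x. RN_deriv g q x * ennreal (u x) \<partial>g)"
    by (rule nn_integral_eq_RN_deriv) (unfold u_def, measurable)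
  also have "\<dots> \<le> (\<integral>\<^sup>+x. ennreal (h x) \<partial>g)"
    using AE_RN_deriv_eq_dens
  proof (intro nn_integral_mono_AE, eventually_elim)
    case (elim x)
    have "dens x * u x \<le> h x"
      unfolding u_def using h_pos[of x] dens_nonneg[of x] by (cases "dens x = 0") auto
    then show ?case
      unfolding elim using dens_nonneg[of x] u_nonneg[of x] by (simp add: ennreal_mult'[symmetric] ennreal_leI)
  qed
  finally have u_nn_int: "(\<integral>\<^sup>+x. ennreal (u x) \<partial>q) \<le> ennreal C"
    using h_int by simp
  have u_int: "integrable q u"
    using u_nn_int u_nonneg
    by (intro integrableI_nonneg u_meas) (auto simp: top.not_eq_extremum intro: le_less_trans)
  have "(\<integral>x. u x \<partial>q) \<le> C"
    using u_nn_int u_nonneg u_int C_nonneg by (simp add: nn_integral_eq_integral)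
  moreover have "(\<integral>x. ln (h x) - ln (dens x) \<partial>q) \<le> (\<integral>x. u x - 1 \<partial>q)"
  proof -
    have AE_le: "AE x in q. ln (h x) - ln (dens x) \<le> u x - 1"
      using AE_dens_pos
    proof eventually_elim
      case (elim x)
      have "ln (h x) - ln (dens x) = ln (h x / dens x)"
        using elim h_pos[of x] by (simp add: ln_div)
      also have "\<dots> \<le> h x / dens x - 1"
        using elim h_pos[of x] by (intro ln_le_minus_one) simp
      finally show ?case unfolding u_def .
    qed
    show ?thesis
      by (rule integral_mono_AE[OF _ _ AE_le]) (use ln_h_int True u_int in auto)
  qed
  ultimately show ?thesis
    using ln_h_int True u_int by (simp add: KL_eq_integral_ln_dens Q.prob_space)
qed

lemma KL_nonneg: "0 \<le> KL q g"
proof -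
  have "ereal (\<integral>x. ln 1 \<partial>q) \<le> KL q g + ereal (1 - 1)"
    by (rule gibbs_inequality) (auto simp: G.emeasure_space_1)
  then show ?thesis by (simp add: zero_ereal_def)
qed

end

lemma dominated_probI:
  "prob_space q \<Longrightarrow> prob_space g \<Longrightarrow> sets q = sets g \<Longrightarrow> absolutely_continuous g q \<Longrightarrow>
    dominated_prob q g"
  by (simp add: dominated_prob_def dominated_prob_axioms_def)

lemma KL_nonneg:
  assumes "prob_space q" "prob_space g" "sets q = sets g"
  shows "0 \<le> KL q g"
proof (cases "absolutely_continuous g q")
  case True
  then show ?thesis using assms by (intro dominated_prob.KL_nonneg dominated_probI)
qed (simp add: KL_def)

text \<open>Clamping to \<open>[1/m, m]\<close> keeps the logarithm bounded while approximating it from both sides.\<close>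
definition clip :: "nat \<Rightarrow> real \<Rightarrow> real" where
  "clip m y = max (min y (real m)) (1 / real m)"

lemma one_div_le_real_nat: "0 < m \<Longrightarrow> 1 / real m \<le> real m"
proof -
  assume "0 < m"
  then have "1 \<le> real m" by simp
  moreover from this have "1 / real m \<le> 1" by simp
  ultimately show ?thesis by linarith
qed

lemma measurable_clip [measurable]:
  assumes [measurable]: "f \<in> borel_measurable M"
  shows "(\<lambda>x. clip m (f x)) \<in> borel_measurable M"
  unfolding clip_def by measurable

lemma clip_pos: "0 < m \<Longrightarrow> 0 < clip m y"
  unfolding clip_def by (rule less_le_trans[OF _ max.cobounded2]) simp

lemma clip_le:
  assumes "0 < m" "0 \<le> y"
  shows "clip m y \<le> y + 1 / real m"
proof -
  have "clip m y \<le> max y (1 / real m)"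
    unfolding clip_def by (intro max.mono) simp_all
  also have "\<dots> \<le> y + 1 / real m"
    using assms by simp
  finally show ?thesis .
qed

lemma ln_clip:
  assumes y: "0 < y" and m: "0 < m"
  shows "ln (clip m y) = min (max 0 (ln y)) (ln (real m)) - min (max 0 (- ln y)) (ln (real m))"
proof -
  have inv_le: "1 / real m \<le> real m" and ln_m: "0 \<le> ln (real m)"
    using m by (simp_all add: one_div_le_real_nat)
  have ln_inv: "ln (1 / real m) = - ln (real m)"
    using m by (simp add: ln_div)
  consider "real m \<le> y" | "1 / real m \<le> y" "y < real m" | "y < 1 / real m"
    by linarith
  then show ?thesis
  proof cases
    case 1
    then have "clip m y = real m" and "ln (real m) \<le> ln y"
      using inv_le m y unfolding clip_def by (auto simp: max_def min_def)
    then show ?thesis using ln_m by (auto simp: max_def min_def)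
  next
    case 2
    then have "clip m y = y" and "ln (1 / real m) \<le> ln y" "ln y \<le> ln (real m)"
      using y m unfolding clip_def by (auto simp: max_def min_def)
    then show ?thesis using ln_inv by (auto simp: max_def min_def)
  next
    case 3
    then have "clip m y = 1 / real m" and "ln y \<le> ln (1 / real m)"
      using y m inv_le unfolding clip_def by (auto simp: max_def min_def)
    then show ?thesis using ln_inv ln_m by (auto simp: max_def min_def)
  qed
qed

lemma abs_ln_clip_le:
  assumes "0 < m"
  shows "\<bar>ln (clip m y)\<bar> \<le> ln (real m)"
proof -
  have "1 / real m \<le> clip m y" "clip m y \<le> real m"
    using one_div_le_real_nat[OF assms] unfolding clip_def by simp_all
  moreover have "0 < clip m y" using assms by (rule clip_pos)
  ultimately have "ln (1 / real m) \<le> ln (clip m y)" "ln (clip m y) \<le> ln (real m)"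
    using assms by simp_all
  then show ?thesis using assms by (simp add: ln_div)
qed

lemma filterlim_ln_Suc: "filterlim (\<lambda>n. ln (real (Suc n))) at_top sequentially"
  by (intro filterlim_compose[OF ln_at_top] filterlim_compose[OF filterlim_real_sequentially]
      filterlim_Suc)

context dominated_prob
begin

lemma nn_integral_clip_dens_le:
  assumes "0 < m"
  shows "(\<integral>\<^sup>+x. ennreal (clip m (dens x)) \<partial>g) \<le> ennreal (1 + 1 / real m)"
proof -
  have "(\<integral>\<^sup>+x. ennreal (clip m (dens x)) \<partial>g) \<le> (\<integral>\<^sup>+x. ennreal (dens x) + ennreal (1 / real m) \<partial>g)"
    using clip_le[OF assms dens_nonneg] dens_nonneg
    by (intro nn_integral_mono) (simp flip: ennreal_plus add: ennreal_leI)
  also have "\<dots> = (\<integral>\<^sup>+x. ennreal (dens x) \<partial>g) + ennreal (1 / real m)"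
    by (subst nn_integral_add) (auto simp: G.emeasure_space_1)
  also have "\<dots> \<le> ennreal (1 + 1 / real m)"
    using nn_integral_dens_le_one by (simp add: ennreal_plus add_right_mono)
  finally show ?thesis .
qed

lemma integrable_neg_ln_dens: "integrable q (\<lambda>x. max 0 (- ln (dens x)))"
  using nn_integral_neg_ln_dens_le_one
  by (intro integrableI_nonneg) (auto simp: top.not_eq_extremum intro: le_less_trans)

text \<open>As the negative part of \<open>ln dens\<close> is integrable, \<open>KL q g\<close> is the difference of the
  integrals of the two parts even when it is infinite.\<close>
lemma KL_eq_nn_integral_parts:
  "KL q g = enn2ereal (\<integral>\<^sup>+x. max 0 (ln (dens x)) \<partial>q) + - enn2ereal (\<integral>\<^sup>+x. max 0 (- ln (dens x)) \<partial>q)"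
proof -
  define P where "P x = max 0 (ln (dens x))" for x
  define N where "N x = max 0 (- ln (dens x))" for x
  have P_meas [measurable]: "P \<in> borel_measurable q"
    unfolding P_def by measurable
  have PN_nonneg: "0 \<le> P x" "0 \<le> N x" for x
    unfolding P_def N_def by auto
  have N_int: "integrable q N"
    unfolding N_def by (rule integrable_neg_ln_dens)
  have ln_dens: "ln (dens x) = P x - N x" for x
    unfolding P_def N_def by auto
  have "KL q g = enn2ereal (\<integral>\<^sup>+x. P x \<partial>q) + - enn2ereal (\<integral>\<^sup>+x. N x \<partial>q)"
  proof (cases "integrable q P")
    case True
    have "(\<integral>\<^sup>+x. P x \<partial>q) = ennreal (\<integral>x. P x \<partial>q)" "(\<integral>\<^sup>+x. N x \<partial>q) = ennreal (\<integral>x. N x \<partial>q)"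
      using True N_int PN_nonneg by (simp_all add: nn_integral_eq_integral)
    moreover have "0 \<le> (\<integral>x. P x \<partial>q)" "0 \<le> (\<integral>x. N x \<partial>q)"
      using PN_nonneg by (simp_all add: Bochner_Integration.integral_nonneg)
    moreover have "integrable q (\<lambda>x. ln (dens x))"
      unfolding ln_dens using True N_int by auto
    moreover have "(\<integral>x. ln (dens x) \<partial>q) = (\<integral>x. P x \<partial>q) - (\<integral>x. N x \<partial>q)"
      unfolding ln_dens using True N_int by simp
    ultimately show ?thesis by (simp add: KL_eq_integral_ln_dens)
  next
    case False
    have "(\<integral>\<^sup>+x. P x \<partial>q) = \<infinity>"
    proof (rule ccontr)
      assume "(\<integral>\<^sup>+x. P x \<partial>q) \<noteq> \<infinity>"
      then have "integrable q P"
        using PN_nonneg by (intro integrableI_nonneg P_meas) (auto simp: top.not_eq_extremum)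
      then show False using False by simp
    qed
    moreover have "\<not> integrable q (\<lambda>x. ln (dens x))"
    proof
      assume "integrable q (\<lambda>x. ln (dens x))"
      then have "integrable q (\<lambda>x. ln (dens x) + N x)" using N_int by auto
      then show False using False by (simp add: ln_dens)
    qed
    moreover have "enn2ereal (\<integral>\<^sup>+x. N x \<partial>q) \<noteq> \<infinity>"
      using nn_integral_neg_ln_dens_le_one unfolding N_def
      by (auto simp: enn2ereal_eq_top_iff ennreal_le_1 top_unique)
    ultimately show ?thesis by (simp add: KL_eq_integral_ln_dens)
  qed
  then show ?thesis by (simp only: P_def N_def)
qed

lemma KL_eq_ln_clip_lim: "(\<lambda>n. ereal (\<integral>x. ln (clip (Suc n) (dens x)) \<partial>q)) \<longlonglongrightarrow> KL q g"
proof -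
  define P where "P x = max 0 (ln (dens x))" for x
  define N where "N x = max 0 (- ln (dens x))" for x
  define c where "c n = ln (real (Suc n))" for n
  have P_meas [measurable]: "P \<in> borel_measurable q" and N_meas [measurable]: "N \<in> borel_measurable q"
    unfolding P_def N_def by measurable
  have PN_nonneg: "0 \<le> P x" "0 \<le> N x" for x
    unfolding P_def N_def by auto
  have c: "incseq c" "0 \<le> c n" "filterlim c at_top sequentially" for n
    unfolding c_def incseq_def using filterlim_ln_Suc by auto
  have int_min: "integrable q (\<lambda>x. min (h x) (c n))" if [measurable]: "h \<in> borel_measurable q"
    and "\<And>x. 0 \<le> h x" for h n
    by (rule Q.integrable_const_bound[where B = "c n"]) (use that c(2) in auto)
  have "(\<integral>x. ln (clip (Suc n) (dens x)) \<partial>q) =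
      (\<integral>x. min (P x) (c n) \<partial>q) - (\<integral>x. min (N x) (c n) \<partial>q)" for n
  proof -
    have AE_eq: "AE x in q. ln (clip (Suc n) (dens x)) = min (P x) (c n) - min (N x) (c n)"
      using AE_dens_pos by eventually_elim (simp add: ln_clip P_def N_def c_def)
    have "(\<integral>x. ln (clip (Suc n) (dens x)) \<partial>q) = (\<integral>x. min (P x) (c n) - min (N x) (c n) \<partial>q)"
      by (rule integral_cong_AE[OF _ _ AE_eq]; measurable)
    then show ?thesis using int_min PN_nonneg by simp
  qed
  moreover have "(\<lambda>n. ereal (\<integral>x. min (P x) (c n) \<partial>q) + - ereal (\<integral>x. min (N x) (c n) \<partial>q))
      \<longlonglongrightarrow> enn2ereal (\<integral>\<^sup>+x. P x \<partial>q) + - enn2ereal (\<integral>\<^sup>+x. N x \<partial>q)"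
    using nn_integral_neg_ln_dens_le_one PN_nonneg c unfolding N_def[symmetric]
    by (intro tendsto_add_ereal_general tendsto_uminus_ereal Q.tendsto_integral_min)
      (auto simp: enn2ereal_eq_top_iff top_unique)
  moreover have "KL q g = enn2ereal (\<integral>\<^sup>+x. P x \<partial>q) + - enn2ereal (\<integral>\<^sup>+x. N x \<partial>q)"
    unfolding P_def N_def by (rule KL_eq_nn_integral_parts)
  ultimately show ?thesis by simp
qed

end

section \<open>Entrywise marginals\<close>

definition marg :: "('p \<Rightarrow> 'k \<Rightarrow> real) measure \<Rightarrow> 'p \<Rightarrow> 'k \<Rightarrow> real measure" where
  "marg q p k = distr q borel (\<lambda>L. L p k)"

lemma sets_marg [simp]: "sets (marg q p k) = sets borel"
  by (simp add: marg_def)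

lemma marg_integral:
  fixes q :: "('p::finite \<Rightarrow> 'k::finite \<Rightarrow> real) measure" and h :: "real \<Rightarrow> real"
  assumes "sets q = sets Lspace" and "h \<in> borel_measurable borel"
  shows "integrable (marg q p k) h \<longleftrightarrow> integrable q (\<lambda>L. h (L p k))"
    and "integral\<^sup>L (marg q p k) h = (\<integral>L. h (L p k) \<partial>q)"
  unfolding marg_def
  using integrable_distr_eq[OF measurable_entry[OF assms(1)] assms(2)]
    integral_distr[OF measurable_entry[OF assms(1)] assms(2)]
  by auto

lemma prob_space_marg:
  "prob_space q \<Longrightarrow> sets q = sets Lspace \<Longrightarrow> prob_space (marg q p k)"
  unfolding marg_def by (intro prob_space.prob_space_distr measurable_entry)

lemma sets_prior:
  assumes "\<And>k. sets (g k) = sets borel"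
  shows "sets (prior g) = sets (Lspace :: ('p::finite \<Rightarrow> 'k::finite \<Rightarrow> real) measure)"
  unfolding prior_def Lspace_def
  by (intro sets_PiM_cong refl) (auto intro!: sets_PiM_cong assms)

lemma prob_space_prior:
  assumes "\<And>k. prob_space (g k)"
  shows "prob_space (prior g :: ('p::finite \<Rightarrow> 'k::finite \<Rightarrow> real) measure)"
  unfolding prior_def by (intro prob_space_PiM assms)

lemma distr_PiM_PiM_entry:
  fixes Q :: "'p::finite \<Rightarrow> 'k::finite \<Rightarrow> 'a measure"
  assumes "\<And>p k. prob_space (Q p k)"
  shows "distr (\<Pi>\<^sub>M p\<in>UNIV. \<Pi>\<^sub>M k\<in>UNIV. Q p k) (Q p k) (\<lambda>L. L p k) = Q p k"
proof -
  have row: "(\<lambda>L. L p) \<in> measurable (\<Pi>\<^sub>M p\<in>UNIV. \<Pi>\<^sub>M k\<in>UNIV. Q p k) (\<Pi>\<^sub>M k\<in>UNIV. Q p k)"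
    and entry: "(\<lambda>l. l k) \<in> measurable (\<Pi>\<^sub>M k\<in>UNIV. Q p k) (Q p k)"
    by (rule measurable_component_singleton, simp)+
  have "distr (\<Pi>\<^sub>M p\<in>UNIV. \<Pi>\<^sub>M k\<in>UNIV. Q p k) (Q p k) (\<lambda>L. L p k)
      = distr (distr (\<Pi>\<^sub>M p\<in>UNIV. \<Pi>\<^sub>M k\<in>UNIV. Q p k) (\<Pi>\<^sub>M k\<in>UNIV. Q p k) (\<lambda>L. L p)) (Q p k) (\<lambda>l. l k)"
    using row entry by (simp add: distr_distr comp_def)
  also have "\<dots> = distr (\<Pi>\<^sub>M k\<in>UNIV. Q p k) (Q p k) (\<lambda>l. l k)"
    using assms by (subst distr_PiM_component) (auto intro: prob_space_PiM)
  also have "\<dots> = Q p k"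
    using assms by (subst distr_PiM_component) auto
  finally show ?thesis .
qed

lemma marg_PiM_PiM:
  fixes Q :: "'p::finite \<Rightarrow> 'k::finite \<Rightarrow> real measure"
  assumes "\<And>p k. prob_space (Q p k)" "\<And>p k. sets (Q p k) = sets borel"
  shows "marg (\<Pi>\<^sub>M p\<in>UNIV. \<Pi>\<^sub>M k\<in>UNIV. Q p k) p k = Q p k"
proof -
  have "marg (\<Pi>\<^sub>M p\<in>UNIV. \<Pi>\<^sub>M k\<in>UNIV. Q p k) p k = distr (\<Pi>\<^sub>M p\<in>UNIV. \<Pi>\<^sub>M k\<in>UNIV. Q p k) (Q p k) (\<lambda>L. L p k)"
    unfolding marg_def by (rule distr_cong) (auto simp: assms(2))
  then show ?thesis using distr_PiM_PiM_entry[OF assms(1)] by simp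
qed

lemma marg_prior:
  assumes "\<And>k. prob_space (g k)" "\<And>k. sets (g k) = sets borel"
  shows "marg (prior g :: ('p::finite \<Rightarrow> 'k::finite \<Rightarrow> real) measure) p k = g k"
  unfolding prior_def using assms by (rule marg_PiM_PiM)

lemma absolutely_continuous_distr:
  assumes ac: "absolutely_continuous M N" and sets_eq: "sets N = sets M"
    and T: "T \<in> measurable M borel"
  shows "absolutely_continuous (distr M borel T) (distr N borel T)"
  unfolding absolutely_continuous_def
proof
  fix A assume "A \<in> null_sets (distr M borel T)"
  then have "T -` A \<inter> space M \<in> null_sets M" and A: "A \<in> sets borel"
    using null_sets_distr_iff[OF T] by auto
  moreover have "T \<in> measurable N borel"
    using T measurable_cong_sets[OF sets_eq refl] by blast
  ultimately show "A \<in> null_sets (distr N borel T)"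
    using ac sets_eq_imp_space_eq[OF sets_eq] by (auto simp: null_sets_distr_iff absolutely_continuous_def)
qed

lemma dominated_prob_marg:
  fixes q :: "('p::finite \<Rightarrow> 'k::finite \<Rightarrow> real) measure"
  assumes g_prob: "\<And>k. prob_space (g k)" and g_borel: "\<And>k. sets (g k) = sets borel"
    and "dominated_prob q (prior g)"
  shows "dominated_prob (marg q p k) (g k)"
proof -
  interpret dominated_prob q "prior g" by fact
  have sets_q: "sets q = sets Lspace"
    using sets_eq sets_prior[OF g_borel] by simp
  have "absolutely_continuous (marg (prior g) p k) (marg q p k)"
    unfolding marg_def using abs_cont sets_eq measurable_entry[OF sets_prior[OF g_borel]]
    by (rule absolutely_continuous_distr)
  then show ?thesis
    using g_prob g_borel sets_q Q.prob_space_axioms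
    by (intro dominated_probI prob_space_marg) (auto simp: marg_prior[OF g_prob g_borel])
qed

lemma nn_integral_prior_prod:
  fixes u :: "'p::finite \<Rightarrow> 'k::finite \<Rightarrow> real \<Rightarrow> ennreal"
  assumes g_prob: "\<And>k. prob_space (g k)" and u: "\<And>p k. u p k \<in> borel_measurable (g k)"
  shows "(\<integral>\<^sup>+L. (\<Prod>p\<in>UNIV. \<Prod>k\<in>UNIV. u p k (L p k)) \<partial>prior g) = (\<Prod>p\<in>UNIV. \<Prod>k\<in>UNIV. \<integral>\<^sup>+x. u p k x \<partial>g k)"
proof -
  have sf_g: "product_sigma_finite g"
    unfolding product_sigma_finite_def using g_prob prob_space_imp_sigma_finite by blast
  have sf_rows: "product_sigma_finite (\<lambda>p::'p. \<Pi>\<^sub>M k\<in>UNIV. g k)"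
    unfolding product_sigma_finite_def using prob_space_PiM[of UNIV g] g_prob prob_space_imp_sigma_finite by blast
  have row_measurable: "(\<lambda>l. \<Prod>k\<in>UNIV. u p k (l k)) \<in> borel_measurable (\<Pi>\<^sub>M k\<in>UNIV. g k)" for p
  proof (intro borel_measurable_prod_ennreal)
    fix k
    have "(\<lambda>l. l k) \<in> measurable (\<Pi>\<^sub>M k\<in>UNIV. g k) (g k)"
      by (rule measurable_component_singleton) simp
    then show "(\<lambda>l. u p k (l k)) \<in> borel_measurable (\<Pi>\<^sub>M k\<in>UNIV. g k)"
      using u measurable_compose by blast
  qed
  have "(\<integral>\<^sup>+L. (\<Prod>p\<in>UNIV. \<Prod>k\<in>UNIV. u p k (L p k)) \<partial>prior g)
      = (\<Prod>p\<in>UNIV. \<integral>\<^sup>+l. (\<Prod>k\<in>UNIV. u p k (l k)) \<partial>\<Pi>\<^sub>M k\<in>UNIV. g k)"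
    unfolding prior_def using row_measurable by (intro product_sigma_finite.product_nn_integral_prod[OF sf_rows]) auto
  also have "\<dots> = (\<Prod>p\<in>UNIV. \<Prod>k\<in>UNIV. \<integral>\<^sup>+x. u p k x \<partial>g k)"
    using u by (intro prod.cong refl product_sigma_finite.product_nn_integral_prod[OF sf_g]) auto
  finally show ?thesis .
qed

lemma tendsto_sum_ereal_nonneg:
  fixes f :: "'i \<Rightarrow> nat \<Rightarrow> ereal"
  assumes "\<And>i. i \<in> S \<Longrightarrow> f i \<longlonglongrightarrow> a i" and "\<And>i. i \<in> S \<Longrightarrow> 0 \<le> a i"
  shows "(\<lambda>n. \<Sum>i\<in>S. f i n) \<longlonglongrightarrow> (\<Sum>i\<in>S. a i)"
  using assms
proof (induction S rule: infinite_finite_induct)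
  case (insert i S)
  have "0 \<le> (\<Sum>j\<in>S. a j)" using insert by (intro sum_nonneg) auto
  then show ?case using insert by (simp, intro tendsto_add_ereal_general) auto
qed simp_all

text \<open>Gibbs' inequality applied to the product of the clipped marginal densities, whose integral
  against the product prior factorises.\<close>
lemma ln_clip_marginals_le_KL:
  fixes q :: "('p::finite \<Rightarrow> 'k::finite \<Rightarrow> real) measure" and g :: "'k \<Rightarrow> real measure"
  assumes g_prob: "\<And>k. prob_space (g k)" and g_borel: "\<And>k. sets (g k) = sets borel"
    and dom: "dominated_prob q (prior g)"
  shows "ereal (\<Sum>p\<in>UNIV. \<Sum>k\<in>UNIV. \<integral>x. ln (clip (Suc n) (dominated_prob.dens (marg q p k) (g k) x)) \<partial>marg q p k)
    \<le> KL q (prior g) + ereal ((1 + 1 / real (Suc n)) ^ (CARD('p) * CARD('k)) - 1)"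
proof -
  let ?G = "prior g :: ('p \<Rightarrow> 'k \<Rightarrow> real) measure"
  interpret dominated_prob q ?G by (fact dom)
  have G_sets: "sets ?G = sets Lspace" by (rule sets_prior[OF g_borel])
  have q_sets: "sets q = sets Lspace" using sets_eq G_sets by simp
  have marg_dom: "dominated_prob (marg q p k) (g k)" for p k
    using g_prob g_borel dom by (rule dominated_prob_marg)
  define d where "d p k = dominated_prob.dens (marg q p k) (g k)" for p k
  define h where "h L = (\<Prod>p\<in>UNIV. \<Prod>k\<in>UNIV. clip (Suc n) (d p k (L p k)))" for L
  define c where "c = 1 + 1 / real (Suc n)"
  have c_nonneg: "0 \<le> c" unfolding c_def by simp
  have d_meas [measurable]: "d p k \<in> borel_measurable borel" "d p k \<in> borel_measurable (g k)" for p k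
    unfolding d_def using dominated_prob.borel_measurable_dens_g[OF marg_dom, of p k]
    by (simp_all add: measurable_cong_sets[OF g_borel refl])
  have [measurable]: "(\<lambda>L. L p k) \<in> borel_measurable q" "(\<lambda>L. L p k) \<in> borel_measurable ?G" for p k
    using q_sets G_sets by (simp_all add: measurable_entry)
  have ln_h: "ln (h L) = (\<Sum>p\<in>UNIV. \<Sum>k\<in>UNIV. ln (clip (Suc n) (d p k (L p k))))" for L
    unfolding h_def by (simp add: ln_prod prod_pos clip_pos less_imp_neq[symmetric])
  have ln_clip_int: "integrable q (\<lambda>L. ln (clip (Suc n) (d p k (L p k))))" for p k
  proof (rule Q.integrable_const_bound[where B = "ln (real (Suc n))"])
    show "AE L in q. norm (ln (clip (Suc n) (d p k (L p k)))) \<le> ln (real (Suc n))"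
      using abs_ln_clip_le[of "Suc n"] by (intro AE_I2) simp
  qed measurable
  have "(\<integral>\<^sup>+L. ennreal (h L) \<partial>?G) = (\<integral>\<^sup>+L. (\<Prod>p\<in>UNIV. \<Prod>k\<in>UNIV. ennreal (clip (Suc n) (d p k (L p k)))) \<partial>?G)"
    unfolding h_def by (simp add: prod_ennreal clip_pos less_imp_le prod_nonneg)
  also have "\<dots> = (\<Prod>p\<in>UNIV. \<Prod>k\<in>UNIV. \<integral>\<^sup>+x. ennreal (clip (Suc n) (d p k x)) \<partial>g k)"
    by (rule nn_integral_prior_prod[OF g_prob]) measurable
  also have "\<dots> \<le> (\<Prod>p\<in>(UNIV::'p set). \<Prod>k\<in>(UNIV::'k set). ennreal c)"
    using dominated_prob.nn_integral_clip_dens_le[OF marg_dom, where m = "Suc n"] unfolding d_def c_def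
    by (intro prod_mono_ennreal) auto
  also have "\<dots> = ennreal (c ^ (CARD('p) * CARD('k)))"
    using c_nonneg by (simp add: ennreal_power power_mult[symmetric] mult.commute)
  finally have h_int: "(\<integral>\<^sup>+L. ennreal (h L) \<partial>?G) \<le> ennreal (c ^ (CARD('p) * CARD('k)))" .
  have "integrable q (\<lambda>L. ln (h L))"
    unfolding ln_h using ln_clip_int by auto
  then have "ereal (\<integral>L. ln (h L) \<partial>q) \<le> KL q ?G + ereal (c ^ (CARD('p) * CARD('k)) - 1)"
    using h_int c_nonneg by (intro gibbs_inequality) (auto simp: h_def prod_pos clip_pos)
  moreover have "(\<integral>x. ln (clip (Suc n) (d p k x)) \<partial>marg q p k) = (\<integral>L. ln (clip (Suc n) (d p k (L p k))) \<partial>q)"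
    for p k
    by (rule marg_integral(2)[OF q_sets]) measurable
  then have "(\<integral>L. ln (h L) \<partial>q) = (\<Sum>p\<in>UNIV. \<Sum>k\<in>UNIV. \<integral>x. ln (clip (Suc n) (d p k x)) \<partial>marg q p k)"
    unfolding ln_h using ln_clip_int by (simp add: integral_sum integrable_sum)
  ultimately show ?thesis unfolding c_def d_def by simp
qed

lemma KL_marginals_le:
  fixes q :: "('p::finite \<Rightarrow> 'k::finite \<Rightarrow> real) measure" and g :: "'k \<Rightarrow> real measure"
  assumes g_prob: "\<And>k. prob_space (g k)" and g_borel: "\<And>k. sets (g k) = sets borel"
    and q_prob: "prob_space q" and q_sets: "sets q = sets Lspace"
  shows "(\<Sum>p\<in>UNIV. \<Sum>k\<in>UNIV. KL (marg q p k) (g k)) \<le> KL q (prior g)"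
proof (cases "absolutely_continuous (prior g) q")
  case False
  then show ?thesis by (simp add: KL_def)
next
  case True
  let ?G = "prior g :: ('p \<Rightarrow> 'k \<Rightarrow> real) measure"
  define m where "m = CARD('p) * CARD('k)"
  have dom: "dominated_prob q ?G"
    using q_prob prob_space_prior[OF g_prob] q_sets sets_prior[of g, OF g_borel] True
    by (intro dominated_probI) auto
  have marg_dom: "dominated_prob (marg q p k) (g k)" for p k
    using g_prob g_borel dom by (rule dominated_prob_marg)
  have lim: "(\<lambda>n. ereal (\<Sum>p\<in>UNIV. \<Sum>k\<in>UNIV.
        \<integral>x. ln (clip (Suc n) (dominated_prob.dens (marg q p k) (g k) x)) \<partial>marg q p k))
      \<longlonglongrightarrow> (\<Sum>p\<in>UNIV. \<Sum>k\<in>UNIV. KL (marg q p k) (g k))"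
    unfolding sum_ereal[symmetric]
    using dominated_prob.KL_eq_ln_clip_lim[OF marg_dom] dominated_prob.KL_nonneg[OF marg_dom]
    by (intro tendsto_sum_ereal_nonneg sum_nonneg) auto
  have "(\<lambda>n. 1 / real (Suc n)) \<longlonglongrightarrow> 0"
    using LIMSEQ_inverse_real_of_nat by (simp add: inverse_eq_divide)
  then have "(\<lambda>n. (1 + 1 / real (Suc n)) ^ m - 1) \<longlonglongrightarrow> (1 + 0) ^ m - 1"
    by (intro tendsto_diff tendsto_power tendsto_add tendsto_const)
  then have lim_bound: "(\<lambda>n. KL q ?G + ereal ((1 + 1 / real (Suc n)) ^ m - 1)) \<longlonglongrightarrow> KL q ?G + ereal 0"
    using dominated_prob.KL_nonneg[OF dom] by (intro tendsto_add_ereal_general) auto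
  from LIMSEQ_le[OF lim lim_bound] show ?thesis
    using ln_clip_marginals_le_KL[OF g_prob g_borel dom] unfolding m_def by auto
qed

section \<open>Product distributions\<close>

lemma enn2real_prod: "enn2real (prod f A) = (\<Prod>i\<in>A. enn2real (f i))"
  by (induction A rule: infinite_finite_induct) (auto simp: enn2real_mult)

lemma indicator_PiE_UNIV:
  "indicator (Pi\<^sub>E (UNIV::'i::finite set) A) x = (\<Prod>i\<in>UNIV. (indicator (A i) (x i) :: ennreal))"
proof (cases "x \<in> Pi\<^sub>E UNIV A")
  case False
  then obtain i where "x i \<notin> A i" by (auto simp: PiE_iff)
  then have "(\<Prod>i\<in>UNIV. (indicator (A i) (x i) :: ennreal)) = 0"
    by (intro prod_zero) (auto intro: exI[of _ i])
  then show ?thesis using False by simp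
qed (auto simp: PiE_iff)

lemma PiM_density:
  fixes M :: "'i::finite \<Rightarrow> 'a measure"
  assumes sf: "\<And>i. sigma_finite_measure (M i)"
    and f [measurable]: "\<And>i. f i \<in> borel_measurable (M i)"
    and sf_density: "\<And>i. sigma_finite_measure (density (M i) (f i))"
  shows "(\<Pi>\<^sub>M i\<in>UNIV. density (M i) (f i)) = density (\<Pi>\<^sub>M i\<in>UNIV. M i) (\<lambda>x. \<Prod>i\<in>UNIV. f i (x i))"
proof -
  interpret M: product_sigma_finite M
    using sf by (simp add: product_sigma_finite_def)
  interpret D: product_sigma_finite "\<lambda>i. density (M i) (f i)"
    using sf_density by (simp add: product_sigma_finite_def)
  have meas: "(\<lambda>x. \<Prod>i\<in>UNIV. f i (x i)) \<in> borel_measurable (\<Pi>\<^sub>M i\<in>UNIV. M i)"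
  proof (intro borel_measurable_prod_ennreal)
    fix i :: 'i
    have "(\<lambda>x. x i) \<in> measurable (\<Pi>\<^sub>M i\<in>UNIV. M i) (M i)"
      by (rule measurable_component_singleton) simp
    then show "(\<lambda>x. f i (x i)) \<in> borel_measurable (\<Pi>\<^sub>M i\<in>UNIV. M i)"
      using measurable_compose f by blast
  qed
  show ?thesis
  proof (rule D.PiM_eqI[symmetric])
    show "sets (density (\<Pi>\<^sub>M i\<in>UNIV. M i) (\<lambda>x. \<Prod>i\<in>UNIV. f i (x i))) = sets (\<Pi>\<^sub>M i\<in>UNIV. density (M i) (f i))"
      using sets_PiM_cong[of UNIV UNIV "\<lambda>i. density (M i) (f i)" M] by simp
    fix A assume "\<And>i. i \<in> UNIV \<Longrightarrow> A i \<in> sets (density (M i) (f i))"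
    then have A: "A i \<in> sets (M i)" for i by simp
    have "emeasure (density (\<Pi>\<^sub>M i\<in>UNIV. M i) (\<lambda>x. \<Prod>i\<in>UNIV. f i (x i))) (Pi\<^sub>E UNIV A)
        = (\<integral>\<^sup>+x. (\<Prod>i\<in>UNIV. f i (x i)) * indicator (Pi\<^sub>E UNIV A) x \<partial>\<Pi>\<^sub>M i\<in>UNIV. M i)"
      by (rule emeasure_density[OF meas]) (auto intro!: sets_PiM_I_finite A)
    also have "\<dots> = (\<integral>\<^sup>+x. (\<Prod>i\<in>UNIV. f i (x i) * indicator (A i) (x i)) \<partial>\<Pi>\<^sub>M i\<in>UNIV. M i)"
      by (simp add: indicator_PiE_UNIV prod.distrib)
    also have "\<dots> = (\<Prod>i\<in>UNIV. \<integral>\<^sup>+y. f i y * indicator (A i) y \<partial>M i)"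
      by (rule M.product_nn_integral_prod) (use A in auto)
    also have "\<dots> = (\<Prod>i\<in>UNIV. emeasure (density (M i) (f i)) (A i))"
      using A by (simp add: emeasure_density)
    finally show "emeasure (density (\<Pi>\<^sub>M i\<in>UNIV. M i) (\<lambda>x. \<Prod>i\<in>UNIV. f i (x i))) (Pi\<^sub>E UNIV A)
        = (\<Prod>i\<in>UNIV. emeasure (density (M i) (f i)) (A i))" .
  qed simp
qed

lemma sets_PiM_PiM_borel:
  fixes Q :: "'p::finite \<Rightarrow> 'k::finite \<Rightarrow> real measure"
  assumes "\<And>p k. sets (Q p k) = sets borel"
  shows "sets (\<Pi>\<^sub>M p\<in>UNIV. \<Pi>\<^sub>M k\<in>UNIV. Q p k) = sets Lspace"
  unfolding Lspace_def by (intro sets_PiM_cong refl) (auto intro!: sets_PiM_cong assms)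

lemma PiM_PiM_eq_density_prior:
  fixes Q :: "'p::finite \<Rightarrow> 'k::finite \<Rightarrow> real measure"
  assumes g_prob: "\<And>k. prob_space (g k)" and Q: "\<And>p k. dominated_prob (Q p k) (g k)"
  shows "(\<Pi>\<^sub>M p\<in>UNIV. \<Pi>\<^sub>M k\<in>UNIV. Q p k) =
    density (prior g) (\<lambda>L. \<Prod>p\<in>UNIV. \<Prod>k\<in>UNIV. RN_deriv (g k) (Q p k) (L p k))"
proof -
  define r where "r p k = RN_deriv (g k) (Q p k)" for p k
  have Q_eq: "Q p k = density (g k) (r p k)" for p k
    unfolding r_def using dominated_prob.density_RN_deriv_eq[OF Q] by simp
  have r_meas: "r p k \<in> borel_measurable (g k)" for p k
    unfolding r_def by simp
  have Q_prob: "prob_space (Q p k)" for p k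
    using Q[of p k] by (simp add: dominated_prob_def)
  have sf_g: "sigma_finite_measure (g k)" for k
    using g_prob prob_space_imp_sigma_finite by blast
  have row_eq: "(\<Pi>\<^sub>M k\<in>UNIV. Q p k) = density (\<Pi>\<^sub>M k\<in>UNIV. g k) (\<lambda>l. \<Prod>k\<in>UNIV. r p k (l k))" for p
  proof -
    have "(\<Pi>\<^sub>M k\<in>UNIV. Q p k) = (\<Pi>\<^sub>M k\<in>UNIV. density (g k) (r p k))"
      using Q_eq by simp
    also have "\<dots> = density (\<Pi>\<^sub>M k\<in>UNIV. g k) (\<lambda>l. \<Prod>k\<in>UNIV. r p k (l k))"
    proof (rule PiM_density)
      show "sigma_finite_measure (density (g k) (r p k))" for k
        using prob_space_imp_sigma_finite[OF Q_prob[of p k]] Q_eq[of p k] by simp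
    qed (use sf_g r_meas in auto)
    finally show ?thesis .
  qed
  have "(\<Pi>\<^sub>M p\<in>UNIV. \<Pi>\<^sub>M k\<in>UNIV. Q p k)
      = (\<Pi>\<^sub>M p\<in>UNIV. density (\<Pi>\<^sub>M k\<in>UNIV. g k) (\<lambda>l. \<Prod>k\<in>UNIV. r p k (l k)))"
    by (simp add: row_eq)
  also have "\<dots> = density (prior g) (\<lambda>L. \<Prod>p\<in>UNIV. \<Prod>k\<in>UNIV. r p k (L p k))"
    unfolding prior_def
  proof (rule PiM_density)
    show "sigma_finite_measure (\<Pi>\<^sub>M k\<in>UNIV. g k)"
      using prob_space_PiM[of UNIV g] g_prob prob_space_imp_sigma_finite by blast
    show "(\<lambda>l. \<Prod>k\<in>UNIV. r p k (l k)) \<in> borel_measurable (\<Pi>\<^sub>M k\<in>UNIV. g k)" for p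
    proof (intro borel_measurable_prod_ennreal)
      fix k
      have "(\<lambda>l. l k) \<in> measurable (\<Pi>\<^sub>M k\<in>UNIV. g k) (g k)"
        by (rule measurable_component_singleton) simp
      then show "(\<lambda>l. r p k (l k)) \<in> borel_measurable (\<Pi>\<^sub>M k\<in>UNIV. g k)"
        using r_meas measurable_compose by blast
    qed
    show "sigma_finite_measure (density (\<Pi>\<^sub>M k\<in>UNIV. g k) (\<lambda>l. \<Prod>k\<in>UNIV. r p k (l k)))" for p
      unfolding row_eq[symmetric] by (intro prob_space_imp_sigma_finite prob_space_PiM Q_prob)
  qed
  finally show ?thesis unfolding r_def .
qed

lemma borel_measurable_prod_RN_deriv_prior:
  fixes Q :: "'p::finite \<Rightarrow> 'k::finite \<Rightarrow> real measure"
  assumes g_borel: "\<And>k. sets (g k) = sets borel"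
  shows "(\<lambda>L. \<Prod>p\<in>UNIV. \<Prod>k\<in>UNIV. RN_deriv (g k) (Q p k) (L p k)) \<in> borel_measurable (prior g)"
proof -
  have entry_G: "(\<lambda>L. L p k) \<in> measurable (prior g) (g k)" for p k
    by (subst measurable_cong_sets[OF refl g_borel]) (rule measurable_entry[OF sets_prior[of g, OF g_borel]])
  show ?thesis
    by (intro borel_measurable_prod_ennreal measurable_compose[OF entry_G borel_measurable_RN_deriv])
qed

lemma dominated_prob_PiM_PiM_prior:
  fixes Q :: "'p::finite \<Rightarrow> 'k::finite \<Rightarrow> real measure"
  assumes g_prob: "\<And>k. prob_space (g k)" and g_borel: "\<And>k. sets (g k) = sets borel"
    and Q: "\<And>p k. dominated_prob (Q p k) (g k)"
  shows "dominated_prob (\<Pi>\<^sub>M p\<in>UNIV. \<Pi>\<^sub>M k\<in>UNIV. Q p k) (prior g)"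
proof (rule dominated_probI)
  have Q_prob: "prob_space (Q p k)" and Q_borel: "sets (Q p k) = sets borel" for p k
    using Q[of p k] by (auto simp: dominated_prob_def dominated_prob_axioms_def g_borel)
  show "prob_space (\<Pi>\<^sub>M p\<in>UNIV. \<Pi>\<^sub>M k\<in>UNIV. Q p k)"
    using Q_prob by (intro prob_space_PiM)
  show "sets (\<Pi>\<^sub>M p\<in>UNIV. \<Pi>\<^sub>M k\<in>UNIV. Q p k) = sets (prior g)"
    by (simp add: sets_PiM_PiM_borel[of Q, OF Q_borel] sets_prior[of g, OF g_borel])
  show "absolutely_continuous (prior g) (\<Pi>\<^sub>M p\<in>UNIV. \<Pi>\<^sub>M k\<in>UNIV. Q p k)"
    unfolding PiM_PiM_eq_density_prior[OF g_prob Q]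
    by (rule absolutely_continuousI_density[OF borel_measurable_prod_RN_deriv_prior[OF g_borel]])
qed (rule prob_space_prior[OF g_prob])

lemma AE_ln_dens_PiM_PiM_prior:
  fixes Q :: "'p::finite \<Rightarrow> 'k::finite \<Rightarrow> real measure"
  assumes g_prob: "\<And>k. prob_space (g k)" and g_borel: "\<And>k. sets (g k) = sets borel"
    and Q: "\<And>p k. dominated_prob (Q p k) (g k)"
  defines "q \<equiv> \<Pi>\<^sub>M p\<in>UNIV. \<Pi>\<^sub>M k\<in>UNIV. Q p k"
  shows "AE L in q. ln (dominated_prob.dens q (prior g) L)
    = (\<Sum>p\<in>UNIV. \<Sum>k\<in>UNIV. ln (dominated_prob.dens (Q p k) (g k) (L p k)))"
proof -
  let ?G = "prior g :: ('p \<Rightarrow> 'k \<Rightarrow> real) measure"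
  define R where "R L = (\<Prod>p\<in>UNIV. \<Prod>k\<in>UNIV. RN_deriv (g k) (Q p k) (L p k))" for L :: "'p \<Rightarrow> 'k \<Rightarrow> real"
  define d where "d p k = dominated_prob.dens (Q p k) (g k)" for p k
  have Q_prob: "prob_space (Q p k)" for p k
    using Q[of p k] by (simp add: dominated_prob_def)
  interpret dominated_prob q ?G
    unfolding q_def using g_prob g_borel Q by (rule dominated_prob_PiM_PiM_prior)
  have entry: "(\<lambda>L. L p k) \<in> measurable q (Q p k)" for p k
  proof -
    have "(\<lambda>L. L p) \<in> measurable q (\<Pi>\<^sub>M k\<in>UNIV. Q p k)"
      and "(\<lambda>l. l k) \<in> measurable (\<Pi>\<^sub>M k\<in>UNIV. Q p k) (Q p k)"
      unfolding q_def by (rule measurable_component_singleton, simp)+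
    then show ?thesis by (rule measurable_compose)
  qed
  have marg_q: "distr q (Q p k) (\<lambda>L. L p k) = Q p k" for p k
    unfolding q_def by (rule distr_PiM_PiM_entry[OF Q_prob])
  have "AE L in ?G. R L = RN_deriv ?G q L"
    unfolding R_def q_def PiM_PiM_eq_density_prior[OF g_prob Q]
    by (rule G.RN_deriv_unique[OF borel_measurable_prod_RN_deriv_prior[OF g_borel] refl])
  then have "AE L in q. R L = RN_deriv ?G q L"
    by (rule absolutely_continuous_AE[OF sets_eq abs_cont])
  moreover have "AE L in q. 0 < d p k (L p k)" for p k
  proof -
    have "AE x in Q p k. 0 < d p k x"
      unfolding d_def by (rule dominated_prob.AE_dens_pos[OF Q])
    then have "AE x in distr q (Q p k) (\<lambda>L. L p k). 0 < d p k x"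
      by (simp only: marg_q)
    then show ?thesis by (rule AE_distrD[OF entry])
  qed
  then have "AE L in q. \<forall>p\<in>UNIV. \<forall>k\<in>UNIV. 0 < d p k (L p k)"
    by (intro AE_finite_allI) auto
  ultimately show ?thesis
  proof eventually_elim
    case (elim L)
    have "dens L = (\<Prod>p\<in>UNIV. \<Prod>k\<in>UNIV. d p k (L p k))"
      unfolding dens_def elim(1)[symmetric] R_def d_def dominated_prob.dens_def[OF Q]
      by (simp add: enn2real_prod)
    then show ?case
      using elim(2) unfolding d_def by (simp add: ln_prod prod_pos less_imp_neq[symmetric])
  qed
qed

lemma KL_PiM_PiM_prior:
  fixes Q :: "'p::finite \<Rightarrow> 'k::finite \<Rightarrow> real measure"
  assumes g_prob: "\<And>k. prob_space (g k)" and g_borel: "\<And>k. sets (g k) = sets borel"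
    and Q: "\<And>p k. dominated_prob (Q p k) (g k)" and Q_fin: "\<And>p k. KL (Q p k) (g k) \<noteq> \<infinity>"
  shows "KL (\<Pi>\<^sub>M p\<in>UNIV. \<Pi>\<^sub>M k\<in>UNIV. Q p k) (prior g) = (\<Sum>p\<in>UNIV. \<Sum>k\<in>UNIV. KL (Q p k) (g k))"
proof -
  let ?q = "\<Pi>\<^sub>M p\<in>UNIV. \<Pi>\<^sub>M k\<in>UNIV. Q p k"
  define d where "d p k = dominated_prob.dens (Q p k) (g k)" for p k
  interpret dominated_prob ?q "prior g"
    using g_prob g_borel Q by (rule dominated_prob_PiM_PiM_prior)
  have Q_prob: "prob_space (Q p k)" for p k
    using Q[of p k] by (simp add: dominated_prob_def)
  have entry: "(\<lambda>L. L p k) \<in> measurable ?q (Q p k)" for p k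
  proof -
    have "(\<lambda>L. L p) \<in> measurable ?q (\<Pi>\<^sub>M k\<in>UNIV. Q p k)"
      and "(\<lambda>l. l k) \<in> measurable (\<Pi>\<^sub>M k\<in>UNIV. Q p k) (Q p k)"
      by (rule measurable_component_singleton, simp)+
    then show ?thesis by (rule measurable_compose)
  qed
  have marg_q: "distr ?q (Q p k) (\<lambda>L. L p k) = Q p k" for p k
    by (rule distr_PiM_PiM_entry[OF Q_prob])
  have dens_eq: "AE L in ?q. ln (dens L) = (\<Sum>p\<in>UNIV. \<Sum>k\<in>UNIV. ln (d p k (L p k)))"
    unfolding d_def using g_prob g_borel Q by (rule AE_ln_dens_PiM_PiM_prior)
  have d_int: "integrable (Q p k) (\<lambda>x. ln (d p k x))"
    and KL_Q: "KL (Q p k) (g k) = ereal (\<integral>x. ln (d p k x) \<partial>Q p k)" for p k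
    using Q_fin[of p k] unfolding dominated_prob.KL_eq_integral_ln_dens[OF Q] d_def
    by (auto split: if_splits)
  have ln_d_meas: "(\<lambda>x. ln (d p k x)) \<in> borel_measurable (Q p k)" for p k
    unfolding d_def using dominated_prob.borel_measurable_dens[OF Q] by measurable
  have int_entry: "integrable ?q (\<lambda>L. ln (d p k (L p k)))"
    and integral_entry: "(\<integral>L. ln (d p k (L p k)) \<partial>?q) = (\<integral>x. ln (d p k x) \<partial>Q p k)" for p k
    using d_int[of p k] integrable_distr_eq[OF entry ln_d_meas] integral_distr[OF entry ln_d_meas]
    by (simp_all add: marg_q)
  have sum_int: "integrable ?q (\<lambda>L. \<Sum>p\<in>UNIV. \<Sum>k\<in>UNIV. ln (d p k (L p k)))"
    using int_entry by auto
  then have "integrable ?q (\<lambda>L. ln (dens L))"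
    by (subst integrable_cong_AE[OF _ _ dens_eq]) auto
  moreover have "(\<integral>L. ln (dens L) \<partial>?q) = (\<integral>L. (\<Sum>p\<in>UNIV. \<Sum>k\<in>UNIV. ln (d p k (L p k))) \<partial>?q)"
    by (rule integral_cong_AE[OF _ _ dens_eq]) (use sum_int in auto)
  moreover have "\<dots> = (\<Sum>p\<in>UNIV. \<Sum>k\<in>UNIV. \<integral>x. ln (d p k x) \<partial>Q p k)"
    using int_entry by (simp add: integral_sum integral_entry)
  ultimately show ?thesis
    by (simp add: KL_eq_integral_ln_dens KL_Q)
qed

section \<open>Decoupling of the variational objective\<close>

definition variance_of :: "real measure \<Rightarrow> real" where
  "variance_of Q = (\<integral>l. (l - (\<integral>l'. l' \<partial>Q))\<^sup>2 \<partial>Q)"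

lemma admissible_1_marg:
  fixes q :: "('p::finite \<Rightarrow> 'k::finite \<Rightarrow> real) measure"
  assumes q: "admissible_L Lbar q"
  shows "admissible_1 (Lbar p k) (marg q p k)"
    and "variance_of (marg q p k) = (\<integral>L. (L p k - Lbar p k)\<^sup>2 \<partial>q)"
proof -
  have sets_q: "sets q = sets Lspace" and "prob_space q"
    using q unfolding admissible_L_def by auto
  then have mean: "(\<integral>l. l \<partial>marg q p k) = Lbar p k"
    using marg_integral(2)[OF sets_q, of "\<lambda>x. x"] q unfolding admissible_L_def by simp
  then show "admissible_1 (Lbar p k) (marg q p k)"
    using marg_integral(1)[OF sets_q, of "\<lambda>x. x\<^sup>2"] q \<open>prob_space q\<close> sets_q
    unfolding admissible_1_def admissible_L_def by (auto intro: prob_space_marg)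
  show "variance_of (marg q p k) = (\<integral>L. (L p k - Lbar p k)\<^sup>2 \<partial>q)"
    unfolding variance_of_def mean by (rule marg_integral(2)[OF sets_q]) simp
qed

lemma admissible_L_of_marg:
  fixes q :: "('p::finite \<Rightarrow> 'k::finite \<Rightarrow> real) measure"
  assumes "prob_space q" and sets_q: "sets q = sets Lspace"
    and marg: "\<And>p k. admissible_1 (Lbar p k) (marg q p k)"
  shows "admissible_L Lbar q"
  unfolding admissible_L_def
proof (intro conjI allI assms)
  fix p k
  show "integrable q (\<lambda>L. (L p k)\<^sup>2)"
    using marg_integral(1)[OF sets_q, of "\<lambda>x. x\<^sup>2" p k] marg[of p k] unfolding admissible_1_def by simp
  show "(\<integral>L. L p k \<partial>q) = Lbar p k"
    using marg_integral(2)[OF sets_q, of "\<lambda>x. x" p k] marg[of p k] unfolding admissible_1_def by simp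
qed

lemma KL_nonneg_admissible_1:
  "admissible_1 l Q \<Longrightarrow> prob_space g \<Longrightarrow> sets g = sets borel \<Longrightarrow> 0 \<le> KL Q g"
  unfolding admissible_1_def by (intro KL_nonneg) auto

locale gaussian_factor_model =
  fixes X :: "'n::finite \<Rightarrow> 'p::finite \<Rightarrow> real" and Z :: "'n \<Rightarrow> 'k::finite \<Rightarrow> real"
    and g :: "'k \<Rightarrow> real measure" and \<tau> :: real and Lbar :: "'p \<Rightarrow> 'k \<Rightarrow> real"
  assumes tau_pos: "\<tau> > 0" and Z_orth: "orthonormal_cols Z"
    and g_prob: "\<And>k. prob_space (g k)" and g_borel: "\<And>k. sets (g k) = sets borel"
begin

abbreviation G :: "('p \<Rightarrow> 'k \<Rightarrow> real) measure" where
  "G \<equiv> prior g"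

definition pen :: "'p \<Rightarrow> 'k \<Rightarrow> ereal" where
  "pen p k = (INF Q \<in> {Q. admissible_1 (Lbar p k) Q}. ereal (variance_of Q) + ereal (2 / \<tau>) * KL Q (g k))"

definition log_norm :: real where
  "log_norm = - (real CARD('n) * real CARD('p) / 2) * ln (2 * pi / \<tau>)"

text \<open>Meaningful only when every \<open>pen p k\<close> is finite, as \<open>real_of_ereal \<infinity> = 0\<close>.\<close>
definition opt_value :: real where
  "opt_value = log_norm - \<tau> / 2 * frob_sq X Z Lbar - \<tau> / 2 * (\<Sum>p\<in>UNIV. \<Sum>k\<in>UNIV. real_of_ereal (pen p k))"

lemma pen_le:
  "admissible_1 (Lbar p k) Q \<Longrightarrow> pen p k \<le> ereal (variance_of Q) + ereal (2 / \<tau>) * KL Q (g k)"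
  unfolding pen_def by (rule INF_lower) simp

lemma pen_nonneg: "0 \<le> pen p k"
  unfolding pen_def
proof (rule INF_greatest)
  fix Q assume "Q \<in> {Q. admissible_1 (Lbar p k) Q}"
  then have "0 \<le> KL Q (g k)"
    using g_prob g_borel by (auto intro: KL_nonneg_admissible_1)
  then show "0 \<le> ereal (variance_of Q) + ereal (2 / \<tau>) * KL Q (g k)"
    using tau_pos by (simp add: variance_of_def ereal_0_le_mult add_nonneg_nonneg)
qed

lemma Ppen_eq_pen:
  "Ppen CARD('n) CARD('k) \<tau> (g k) (Lbar p k) =
    ereal (real CARD('n) / (2 * real CARD('k) * \<tau>) * ln (2 * pi / \<tau>)) + ereal (1 / 2) * pen p k"
  unfolding Ppen_def pen_def variance_of_def by simp

lemma Fobj_eq: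
  assumes "admissible_L Lbar q"
  shows "Fobj X g Z \<tau> q = ereal (log_norm - \<tau> / 2 *
    (frob_sq X Z Lbar + (\<Sum>p\<in>UNIV. \<Sum>k\<in>UNIV. variance_of (marg q p k)))) - KL q G"
  unfolding Fobj_def expected_ln_lik[OF tau_pos Z_orth assms] admissible_1_marg(2)[OF assms] log_norm_def ..

lemma KL_marg_nonneg:
  assumes "admissible_L Lbar q"
  shows "0 \<le> KL (marg q p k) (g k)"
  using admissible_1_marg(1)[OF assms] g_prob g_borel by (rule KL_nonneg_admissible_1)

lemma KL_marg_le:
  assumes "admissible_L Lbar q"
  shows "(\<Sum>p\<in>UNIV. \<Sum>k\<in>UNIV. KL (marg q p k) (g k)) \<le> KL q G"
  using assms g_prob g_borel unfolding admissible_L_def by (intro KL_marginals_le) auto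

lemma scaled_penalty_eq_opt_value:
  assumes "\<And>p k. pen p k \<noteq> \<infinity>"
  shows "ereal (- \<tau>) * (ereal (1/2 * frob_sq X Z Lbar) +
      (\<Sum>k\<in>UNIV. \<Sum>p\<in>UNIV. Ppen CARD('n) CARD('k) \<tau> (g k) (Lbar p k))) = ereal opt_value"
proof -
  define c where "c = real CARD('n) / (2 * real CARD('k) * \<tau>) * ln (2 * pi / \<tau>)"
  define ip where "ip p k = real_of_ereal (pen p k)" for p k
  define S where "S = (\<Sum>p\<in>UNIV. \<Sum>k\<in>UNIV. ip p k)"
  define K where "K = real CARD('p) * real CARD('k) * c"
  have pen_ip: "pen p k = ereal (ip p k)" for p k
    using assms[of p k] pen_nonneg[of p k] unfolding ip_def by (cases "pen p k") auto
  have "(\<Sum>k\<in>UNIV. \<Sum>p\<in>UNIV. Ppen CARD('n) CARD('k) \<tau> (g k) (Lbar p k))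
      = ereal (\<Sum>k\<in>UNIV. \<Sum>p\<in>UNIV. c + 1/2 * ip p k)"
    unfolding Ppen_eq_pen c_def pen_ip by simp
  also have "(\<Sum>k\<in>UNIV. \<Sum>p\<in>UNIV. c + 1/2 * ip p k) = K + 1/2 * S"
    unfolding K_def S_def by (simp add: sum.distrib sum_distrib_left sum.swap[of _ "UNIV::'k set"])
  finally have "ereal (- \<tau>) * (ereal (1/2 * frob_sq X Z Lbar) +
      (\<Sum>k\<in>UNIV. \<Sum>p\<in>UNIV. Ppen CARD('n) CARD('k) \<tau> (g k) (Lbar p k)))
      = ereal (- (\<tau> / 2) * frob_sq X Z Lbar - \<tau> * K - \<tau> / 2 * S)"
    by (simp add: algebra_simps)
  moreover have "\<tau> * K = - log_norm"
    unfolding K_def c_def log_norm_def using tau_pos by (simp add: field_simps)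
  ultimately show ?thesis
    unfolding opt_value_def S_def ip_def by simp
qed

lemma scaled_penalty_eq_MInf:
  assumes "pen p0 k0 = \<infinity>"
  shows "ereal (- \<tau>) * (ereal (1/2 * frob_sq X Z Lbar) +
      (\<Sum>k\<in>UNIV. \<Sum>p\<in>UNIV. Ppen CARD('n) CARD('k) \<tau> (g k) (Lbar p k))) = -\<infinity>"
proof -
  have "Ppen CARD('n) CARD('k) \<tau> (g k0) (Lbar p0 k0) = \<infinity>"
    unfolding Ppen_eq_pen assms by simp
  then have "(\<Sum>k\<in>UNIV. \<Sum>p\<in>UNIV. Ppen CARD('n) CARD('k) \<tau> (g k) (Lbar p k)) = \<infinity>"
    by (simp add: sum_Pinfty) blast
  then show ?thesis using tau_pos by simp
qed

lemma KL_marg_finite: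
  assumes "admissible_L Lbar q" "KL q G \<noteq> \<infinity>"
  shows "KL (marg q p k) (g k) \<noteq> \<infinity>"
proof
  assume "KL (marg q p k) (g k) = \<infinity>"
  then have "(\<Sum>p\<in>UNIV. \<Sum>k\<in>UNIV. KL (marg q p k) (g k)) = \<infinity>"
    by (simp add: sum_Pinfty) blast
  then show False
    using KL_marg_le[OF assms(1)] assms(2) by simp
qed

lemma pen_finite_if_KL_finite:
  assumes "admissible_L Lbar q" "KL q G \<noteq> \<infinity>"
  shows "pen p k \<noteq> \<infinity>"
  using pen_le[OF admissible_1_marg(1)[OF assms(1)], of p k] KL_marg_finite[OF assms, of p k]
    KL_marg_nonneg[OF assms(1), of p k] tau_pos
  by (cases "KL (marg q p k) (g k)") auto

lemma KL_prior_nonneg: "admissible_L Lbar q \<Longrightarrow> 0 \<le> KL q G"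
  using g_prob g_borel unfolding admissible_L_def
  by (intro KL_nonneg prob_space_prior) (auto simp: sets_prior)

lemma Fobj_eq_MInf:
  "admissible_L Lbar q \<Longrightarrow> KL q G = \<infinity> \<Longrightarrow> Fobj X g Z \<tau> q = -\<infinity>"
  by (simp add: Fobj_eq)

lemma Fobj_le_opt_value:
  assumes q: "admissible_L Lbar q"
  shows "Fobj X g Z \<tau> q \<le> ereal opt_value"
proof (cases "KL q G")
  case (real \<kappa>)
  define kl where "kl p k = real_of_ereal (KL (marg q p k) (g k))" for p k
  have kl: "KL (marg q p k) (g k) = ereal (kl p k)" for p k
    using KL_marg_finite[OF q, of p k] KL_marg_nonneg[OF q, of p k] real
    unfolding kl_def by (cases "KL (marg q p k) (g k)") auto
  have kl_sum: "(\<Sum>p\<in>UNIV. \<Sum>k\<in>UNIV. kl p k) \<le> \<kappa>"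
    using KL_marg_le[OF q] unfolding kl real by simp
  have "real_of_ereal (pen p k) \<le> variance_of (marg q p k) + 2 / \<tau> * kl p k" for p k
    using pen_le[OF admissible_1_marg(1)[OF q], of p k] pen_nonneg[of p k]
    unfolding kl by (cases "pen p k") auto
  then have "\<tau> / 2 * (\<Sum>p\<in>UNIV. \<Sum>k\<in>UNIV. real_of_ereal (pen p k))
      \<le> \<tau> / 2 * (\<Sum>p\<in>UNIV. \<Sum>k\<in>UNIV. variance_of (marg q p k) + 2 / \<tau> * kl p k)"
    using tau_pos by (intro mult_left_mono sum_mono) auto
  also have "\<dots> = \<tau> / 2 * (\<Sum>p\<in>UNIV. \<Sum>k\<in>UNIV. variance_of (marg q p k)) + (\<Sum>p\<in>UNIV. \<Sum>k\<in>UNIV. kl p k)"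
    using tau_pos by (simp add: sum.distrib sum_distrib_left algebra_simps)
  finally have "log_norm - \<tau> / 2 * (frob_sq X Z Lbar + (\<Sum>p\<in>UNIV. \<Sum>k\<in>UNIV. variance_of (marg q p k))) - \<kappa>
      \<le> opt_value"
    using kl_sum unfolding opt_value_def distrib_left by linarith
  then show ?thesis
    unfolding Fobj_eq[OF q] real by simp
qed (use Fobj_eq_MInf[OF q] KL_prior_nonneg[OF q] in auto)

lemma pen_approx:
  assumes "pen p k \<noteq> \<infinity>" "0 < d"
  shows "\<exists>Q. admissible_1 (Lbar p k) Q \<and>
    ereal (variance_of Q) + ereal (2 / \<tau>) * KL Q (g k) < ereal (real_of_ereal (pen p k) + d)"
proof -
  have "pen p k < ereal (real_of_ereal (pen p k) + d)"
    using assms pen_nonneg[of p k] by (cases "pen p k") auto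
  then show ?thesis
    unfolding pen_def INF_less_iff by auto
qed

lemma Fobj_PiM_PiM:
  assumes Q_adm: "\<And>p k. admissible_1 (Lbar p k) (Q p k)" and Q_fin: "\<And>p k. KL (Q p k) (g k) \<noteq> \<infinity>"
  defines "q \<equiv> \<Pi>\<^sub>M p\<in>UNIV. \<Pi>\<^sub>M k\<in>UNIV. Q p k"
  shows "admissible_L Lbar q"
    and "Fobj X g Z \<tau> q = ereal (log_norm - \<tau> / 2 * (frob_sq X Z Lbar
      + (\<Sum>p\<in>UNIV. \<Sum>k\<in>UNIV. variance_of (Q p k))) - (\<Sum>p\<in>UNIV. \<Sum>k\<in>UNIV. real_of_ereal (KL (Q p k) (g k))))"
proof -
  have Q_prob: "prob_space (Q p k)" and Q_borel: "sets (Q p k) = sets borel" for p k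
    using Q_adm[of p k] unfolding admissible_1_def by auto
  have Q_dom: "dominated_prob (Q p k) (g k)" for p k
    using Q_adm[of p k] Q_fin[of p k] g_prob g_borel
    by (intro dominated_probI) (auto simp: admissible_1_def KL_def split: if_splits)
  have KL_Q: "KL (Q p k) (g k) = ereal (real_of_ereal (KL (Q p k) (g k)))" for p k
    using Q_fin[of p k] KL_nonneg_admissible_1[OF Q_adm g_prob g_borel, of p k]
    by (cases "KL (Q p k) (g k)") auto
  have marg_q: "marg q p k = Q p k" for p k
    unfolding q_def using Q_prob Q_borel by (rule marg_PiM_PiM)
  show q_adm: "admissible_L Lbar q"
    unfolding q_def using Q_prob Q_adm marg_q[unfolded q_def]
    by (intro admissible_L_of_marg prob_space_PiM sets_PiM_PiM_borel Q_borel) auto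
  have "KL q G = (\<Sum>p\<in>UNIV. \<Sum>k\<in>UNIV. KL (Q p k) (g k))"
    unfolding q_def by (rule KL_PiM_PiM_prior[where g = g and Q = Q, OF g_prob g_borel Q_dom Q_fin])
  also have "\<dots> = ereal (\<Sum>p\<in>UNIV. \<Sum>k\<in>UNIV. real_of_ereal (KL (Q p k) (g k)))"
    by (subst KL_Q) simp
  finally show "Fobj X g Z \<tau> q = ereal (log_norm - \<tau> / 2 * (frob_sq X Z Lbar
      + (\<Sum>p\<in>UNIV. \<Sum>k\<in>UNIV. variance_of (Q p k))) - (\<Sum>p\<in>UNIV. \<Sum>k\<in>UNIV. real_of_ereal (KL (Q p k) (g k))))"
    unfolding Fobj_eq[OF q_adm] marg_q by simp
qed

text \<open>Near-optimal one-dimensional distributions for the entries, combined independently, come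
  within any \<open>e > 0\<close> of the value.\<close>
lemma opt_value_le_Ftilde:
  assumes fin: "\<And>p k. pen p k \<noteq> \<infinity>"
  shows "ereal opt_value \<le> Ftilde X g Z \<tau> Lbar"
proof (rule ereal_le_epsilon2)
  fix e :: real assume e: "0 < e"
  define d where "d = 2 * e / (\<tau> * (real CARD('p) * real CARD('k)))"
  have "0 < d" unfolding d_def using e tau_pos by simp
  then obtain Q where Q_adm: "\<And>p k. admissible_1 (Lbar p k) (Q p k)"
    and Q_lt: "\<And>p k. ereal (variance_of (Q p k)) + ereal (2 / \<tau>) * KL (Q p k) (g k)
      < ereal (real_of_ereal (pen p k) + d)"
    using pen_approx[OF fin] by metis
  define kl where "kl p k = real_of_ereal (KL (Q p k) (g k))" for p k
  have Q_fin: "KL (Q p k) (g k) \<noteq> \<infinity>" for p k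
    using Q_lt[of p k] tau_pos by auto
  define q where "q = (\<Pi>\<^sub>M p\<in>UNIV. \<Pi>\<^sub>M k\<in>UNIV. Q p k)"
  have "variance_of (Q p k) + 2 / \<tau> * kl p k \<le> real_of_ereal (pen p k) + d" for p k
    using Q_lt[of p k] Q_fin[of p k] KL_nonneg_admissible_1[OF Q_adm g_prob g_borel, of p k]
    unfolding kl_def by (cases "KL (Q p k) (g k)") auto
  then have "\<tau> / 2 * (\<Sum>p\<in>UNIV. \<Sum>k\<in>UNIV. variance_of (Q p k) + 2 / \<tau> * kl p k)
      \<le> \<tau> / 2 * (\<Sum>p\<in>UNIV. \<Sum>k\<in>UNIV. real_of_ereal (pen p k) + d)"
    using tau_pos by (intro mult_left_mono sum_mono) auto
  moreover have "\<tau> / 2 * (\<Sum>p\<in>UNIV. \<Sum>k\<in>UNIV. real_of_ereal (pen p k) + d)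
      = \<tau> / 2 * (\<Sum>p\<in>UNIV. \<Sum>k\<in>UNIV. real_of_ereal (pen p k)) + e"
  proof -
    have "(\<Sum>p\<in>UNIV. \<Sum>k\<in>UNIV. real_of_ereal (pen p k) + d)
        = (\<Sum>p\<in>UNIV. \<Sum>k\<in>UNIV. real_of_ereal (pen p k)) + real CARD('p) * real CARD('k) * d"
      by (simp add: sum.distrib)
    moreover have "\<tau> / 2 * (real CARD('p) * real CARD('k) * d) = e"
      unfolding d_def using tau_pos by (simp add: field_simps)
    ultimately show ?thesis by (simp add: algebra_simps)
  qed
  moreover have "\<tau> / 2 * (\<Sum>p\<in>UNIV. \<Sum>k\<in>UNIV. variance_of (Q p k) + 2 / \<tau> * kl p k)
      = \<tau> / 2 * (\<Sum>p\<in>UNIV. \<Sum>k\<in>UNIV. variance_of (Q p k)) + (\<Sum>p\<in>UNIV. \<Sum>k\<in>UNIV. kl p k)"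
    using tau_pos by (simp add: sum.distrib sum_distrib_left algebra_simps)
  ultimately have "ereal (opt_value - e) \<le> Fobj X g Z \<tau> q"
    unfolding Fobj_PiM_PiM(2)[OF Q_adm Q_fin, folded q_def kl_def] opt_value_def distrib_left
    by simp
  also have "Fobj X g Z \<tau> q \<le> Ftilde X g Z \<tau> Lbar"
    unfolding Ftilde_def q_def using Fobj_PiM_PiM(1)[OF Q_adm Q_fin] by (intro SUP_upper) simp
  finally show "ereal opt_value \<le> Ftilde X g Z \<tau> Lbar + ereal e"
    by (cases "Ftilde X g Z \<tau> Lbar") auto
qed

end

theorem proposition2:
  fixes X :: "'n::finite \<Rightarrow> 'p::finite \<Rightarrow> real"
    and Z :: "'n \<Rightarrow> 'k::finite \<Rightarrow> real"
    and g :: "'k \<Rightarrow> real measure"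
    and \<tau> :: real
    and Lbar :: "'p \<Rightarrow> 'k \<Rightarrow> real"
  assumes tau_pos: "\<tau> > 0"
    and Z_orth: "orthonormal_cols Z"
    and g_prob: "\<And>k. prob_space (g k)"
    and g_borel: "\<And>k. sets (g k) = sets borel"
  shows "Ftilde X g Z \<tau> Lbar =
    ereal (- \<tau>) * (ereal (1/2 * frob_sq X Z Lbar) +
      (\<Sum>k\<in>UNIV. \<Sum>p\<in>UNIV. Ppen CARD('n) CARD('k) \<tau> (g k) (Lbar p k)))"
proof -
  interpret gaussian_factor_model X Z g \<tau> Lbar
    using assms by (rule gaussian_factor_model.intro)
  show ?thesis
  proof (cases "\<forall>p k. pen p k \<noteq> \<infinity>")
    case True
    have "Ftilde X g Z \<tau> Lbar \<le> ereal opt_value"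
      unfolding Ftilde_def by (rule SUP_least) (auto intro: Fobj_le_opt_value)
    moreover have "ereal opt_value \<le> Ftilde X g Z \<tau> Lbar"
      using True by (intro opt_value_le_Ftilde) auto
    ultimately have "Ftilde X g Z \<tau> Lbar = ereal opt_value"
      by (rule antisym)
    then show ?thesis
      by (simp only: scaled_penalty_eq_opt_value[OF True[rule_format]])
  next
    case False
    then obtain p0 k0 where pen_inf: "pen p0 k0 = \<infinity>" by blast
    then have "Fobj X g Z \<tau> q = -\<infinity>" if "admissible_L Lbar q" for q
      using that pen_finite_if_KL_finite Fobj_eq_MInf by blast
    then have "Ftilde X g Z \<tau> Lbar = -\<infinity>"
      unfolding Ftilde_def by (intro antisym SUP_least) auto
    then show ?thesis by (simp only: scaled_penalty_eq_MInf[OF pen_inf])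
  qed
qed

end
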